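(* Let $K$ be a division ring, $Q$ a finite quiver and $\boldsymbol{\sigma}\colon Q_1\to\operatorname{Aut}(K)$, $a\mapsto\sigma_a$, a function. If $Q$ is acyclic, then the semilinear path algebra $K_{\boldsymbol{\sigma}}Q$ is a hereditary $K$-ring.
   Context: A $K$-ring is a ring $A$ with a ring homomorphism $K\to A$. The semilinear path algebra $K_{\boldsymbol{\sigma}}Q$ is the $K$-ring generated by elements $e_v$ ($v\in Q_0$) and arrows $a\in Q_1$ subject to: $\sum_{v}e_v=1$, $e_ve_v=e_v$, $e_ue_v=0$ for $u\neq v$, $e_v\lambda=\lambda e_v$, $e_{h(a)}a=a=ae_{t(a)}$, and $a\lambda=\sigma_a(\lambda)a$ for all $\lambda\in K$, where $h(a),t(a)$ are the head and tail of $a$. *)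

theory Defs
  imports "HOL-Algebra.Module" "HOL-Algebra.AbelCoset" "HOL-Algebra.RingHom"
begin

text \<open>An arrow a goes from tl_q a to hd_q a. A list of arrows [a1,...,an]
  stands for the path a1 a2 ... an (composition written right to left, so
  a_i a_(i+1) requires tl_q a_i = hd_q a_(i+1)).\<close>

definition composable :: "'e set \<Rightarrow> ('e \<Rightarrow> 'v) \<Rightarrow> ('e \<Rightarrow> 'v) \<Rightarrow> 'e list \<Rightarrow> bool" where
  "composable Q1 hd_q tl_q as \<longleftrightarrow>
     set as \<subseteq> Q1 \<and> (\<forall>i. Suc i < length as \<longrightarrow> tl_q (as ! i) = hd_q (as ! Suc i))"

definition finite_quiver :: "'v set \<Rightarrow> 'e set \<Rightarrow> ('e \<Rightarrow> 'v) \<Rightarrow> ('e \<Rightarrow> 'v) \<Rightarrow> bool" where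
  "finite_quiver Q0 Q1 hd_q tl_q \<longleftrightarrow> finite Q0 \<and> finite Q1 \<and>
     (\<forall>a\<in>Q1. hd_q a \<in> Q0 \<and> tl_q a \<in> Q0)"

definition acyclic_quiver :: "'e set \<Rightarrow> ('e \<Rightarrow> 'v) \<Rightarrow> ('e \<Rightarrow> 'v) \<Rightarrow> bool" where
  "acyclic_quiver Q1 hd_q tl_q \<longleftrightarrow>
     (\<forall>as. as \<noteq> [] \<and> composable Q1 hd_q tl_q as \<longrightarrow> hd_q (hd as) \<noteq> tl_q (last as))"

text \<open>Paths are pairs (v, as): if as = [] this is the trivial path e_v at vertex v,
  otherwise it is the path as and v must be its head vertex.\<close>
definition valid_path :: "'v set \<Rightarrow> 'e set \<Rightarrow> ('e \<Rightarrow> 'v) \<Rightarrow> ('e \<Rightarrow> 'v) \<Rightarrow> 'v \<times> 'e list \<Rightarrow> bool" where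
  "valid_path Q0 Q1 hd_q tl_q p \<longleftrightarrow> fst p \<in> Q0 \<and> composable Q1 hd_q tl_q (snd p) \<and>
     (snd p \<noteq> [] \<longrightarrow> fst p = hd_q (hd (snd p)))"

definition path_head :: "'v \<times> 'e list \<Rightarrow> 'v" where
  "path_head p = fst p"

definition path_tail :: "('e \<Rightarrow> 'v) \<Rightarrow> 'v \<times> 'e list \<Rightarrow> 'v" where
  "path_tail tl_q p = (if snd p = [] then fst p else tl_q (last (snd p)))"

definition path_cat :: "'v \<times> 'e list \<Rightarrow> 'v \<times> 'e list \<Rightarrow> 'v \<times> 'e list" where
  "path_cat p q = (fst p, snd p @ snd q)"

text \<open>sigma_p = sigma_(a1) o ... o sigma_(an) for p = a1 ... an (identity on trivial paths),
  so that p * lambda = sigma_p(lambda) * p.\<close>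
definition path_sigma :: "('e \<Rightarrow> 'k \<Rightarrow> 'k) \<Rightarrow> 'v \<times> 'e list \<Rightarrow> 'k \<Rightarrow> 'k" where
  "path_sigma \<sigma> p = foldr (\<lambda>a f. \<sigma> a \<circ> f) (snd p) id"

definition ring_automorphism :: "('k::division_ring \<Rightarrow> 'k) \<Rightarrow> bool" where
  "ring_automorphism f \<longleftrightarrow> bij f \<and> f 1 = 1 \<and>
     (\<forall>x y. f (x + y) = f x + f y) \<and> (\<forall>x y. f (x * y) = f x * f y)"

text \<open>Concrete model of K_sigma Q: it is the free left K-module on the paths of Q
  (elements are finitely supported coefficient functions on valid paths,
  x = sum_p x(p) p), with multiplication determined by
  (lambda p)(mu q) = lambda sigma_p(mu) (p q) if tail p = head q, and 0 otherwise.
  The unit is sum_v e_v; K embeds via lambda |-> sum_v lambda e_v.\<close>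

definition path_alg_carrier ::
  "'v set \<Rightarrow> 'e set \<Rightarrow> ('e \<Rightarrow> 'v) \<Rightarrow> ('e \<Rightarrow> 'v) \<Rightarrow> ('v \<times> 'e list \<Rightarrow> 'k::division_ring) set" where
  "path_alg_carrier Q0 Q1 hd_q tl_q =
     {x. finite {p. x p \<noteq> 0} \<and> (\<forall>p. x p \<noteq> 0 \<longrightarrow> valid_path Q0 Q1 hd_q tl_q p)}"

definition path_alg_mult ::
  "('e \<Rightarrow> 'v) \<Rightarrow> ('e \<Rightarrow> 'k \<Rightarrow> 'k) \<Rightarrow> ('v \<times> 'e list \<Rightarrow> 'k::division_ring)
     \<Rightarrow> ('v \<times> 'e list \<Rightarrow> 'k) \<Rightarrow> ('v \<times> 'e list \<Rightarrow> 'k)" where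
  "path_alg_mult tl_q \<sigma> x y = (\<lambda>r.
     \<Sum>(p, q) \<in> {(p, q). x p \<noteq> 0 \<and> y q \<noteq> 0 \<and> path_tail tl_q p = path_head q \<and> path_cat p q = r}.
        x p * path_sigma \<sigma> p (y q))"

definition semilinear_path_algebra ::
  "'v set \<Rightarrow> 'e set \<Rightarrow> ('e \<Rightarrow> 'v) \<Rightarrow> ('e \<Rightarrow> 'v) \<Rightarrow> ('e \<Rightarrow> 'k \<Rightarrow> 'k)
     \<Rightarrow> ('v \<times> 'e list \<Rightarrow> 'k::division_ring) ring" where
  "semilinear_path_algebra Q0 Q1 hd_q tl_q \<sigma> =
     \<lparr> carrier = path_alg_carrier Q0 Q1 hd_q tl_q,
       mult = path_alg_mult tl_q \<sigma>,
       one = (\<lambda>p. if fst p \<in> Q0 \<and> snd p = [] then 1 else 0),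
       zero = (\<lambda>p. 0),
       add = (\<lambda>x y p. x p + y p) \<rparr>"

definition path_alg_scalar :: "'v set \<Rightarrow> 'k::division_ring \<Rightarrow> ('v \<times> 'e list \<Rightarrow> 'k)" where
  "path_alg_scalar Q0 c = (\<lambda>p. if fst p \<in> Q0 \<and> snd p = [] then c else 0)"

definition lmodule :: "('a, 'x) ring_scheme \<Rightarrow> ('a, 'm) module \<Rightarrow> bool" where
  "lmodule R M \<longleftrightarrow> ring R \<and> abelian_group M \<and>
     (\<forall>a\<in>carrier R. \<forall>x\<in>carrier M. a \<odot>\<^bsub>M\<^esub> x \<in> carrier M) \<and>
     (\<forall>a\<in>carrier R. \<forall>b\<in>carrier R. \<forall>x\<in>carrier M.
        (a \<oplus>\<^bsub>R\<^esub> b) \<odot>\<^bsub>M\<^esub> x = a \<odot>\<^bsub>M\<^esub> x \<oplus>\<^bsub>M\<^esub> b \<odot>\<^bsub>M\<^esub> x) \<and>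
     (\<forall>a\<in>carrier R. \<forall>x\<in>carrier M. \<forall>y\<in>carrier M.
        a \<odot>\<^bsub>M\<^esub> (x \<oplus>\<^bsub>M\<^esub> y) = a \<odot>\<^bsub>M\<^esub> x \<oplus>\<^bsub>M\<^esub> a \<odot>\<^bsub>M\<^esub> y) \<and>
     (\<forall>a\<in>carrier R. \<forall>b\<in>carrier R. \<forall>x\<in>carrier M.
        (a \<otimes>\<^bsub>R\<^esub> b) \<odot>\<^bsub>M\<^esub> x = a \<odot>\<^bsub>M\<^esub> (b \<odot>\<^bsub>M\<^esub> x)) \<and>
     (\<forall>x\<in>carrier M. \<one>\<^bsub>R\<^esub> \<odot>\<^bsub>M\<^esub> x = x)"

definition lmod_hom :: "('a, 'x) ring_scheme \<Rightarrow> ('a, 'm) module \<Rightarrow> ('a, 'n) module \<Rightarrow> ('m \<Rightarrow> 'n) set" where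
  "lmod_hom R M N = {f. f \<in> carrier M \<rightarrow> carrier N \<and>
     (\<forall>x\<in>carrier M. \<forall>y\<in>carrier M. f (x \<oplus>\<^bsub>M\<^esub> y) = f x \<oplus>\<^bsub>N\<^esub> f y) \<and>
     (\<forall>a\<in>carrier R. \<forall>x\<in>carrier M. f (a \<odot>\<^bsub>M\<^esub> x) = a \<odot>\<^bsub>N\<^esub> f x)}"

text \<open>Projectivity of P (lifting property), tested against left modules M, N whose
  carriers live in the types 'm and 'n. Since the main theorem is universally
  quantified over these type variables, this amounts to the usual definition.\<close>
definition projective_lmod ::
  "('a, 'x) ring_scheme \<Rightarrow> ('a, 'p) module \<Rightarrow> 'm itself \<Rightarrow> 'n itself \<Rightarrow> bool" where
  "projective_lmod R P (TYPE('m)) (TYPE('n)) \<longleftrightarrow> lmodule R P \<and>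
     (\<forall>(M::('a, 'm) module) (N::('a, 'n) module). lmodule R M \<and> lmodule R N \<longrightarrow>
       (\<forall>g\<in>lmod_hom R M N. g ` carrier M = carrier N \<longrightarrow>
         (\<forall>f\<in>lmod_hom R P N. \<exists>h\<in>lmod_hom R P M. \<forall>x\<in>carrier P. g (h x) = f x)))"

definition left_ideal :: "'a set \<Rightarrow> ('a, 'x) ring_scheme \<Rightarrow> bool" where
  "left_ideal I R \<longleftrightarrow> additive_subgroup I R \<and>
     (\<forall>a\<in>I. \<forall>x\<in>carrier R. x \<otimes>\<^bsub>R\<^esub> a \<in> I)"

definition ideal_lmod :: "('a, 'x) ring_scheme \<Rightarrow> 'a set \<Rightarrow> ('a, 'a) module" where
  "ideal_lmod R I = \<lparr> carrier = I, mult = mult R, one = one R, zero = zero R,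
                      add = add R, smult = mult R \<rparr>"

definition opposite_ring :: "'a ring \<Rightarrow> 'a ring" where
  "opposite_ring R = R\<lparr> mult := (\<lambda>x y. y \<otimes>\<^bsub>R\<^esub> x) \<rparr>"

definition left_hereditary :: "'a ring \<Rightarrow> 'm itself \<Rightarrow> 'n itself \<Rightarrow> bool" where
  "left_hereditary R tm tn \<longleftrightarrow> ring R \<and>
     (\<forall>I. left_ideal I R \<longrightarrow> projective_lmod R (ideal_lmod R I) tm tn)"

text \<open>Hereditary: left and right hereditary (right ideals of R are the left ideals
  of the opposite ring).\<close>
definition hereditary :: "'a ring \<Rightarrow> 'm itself \<Rightarrow> 'n itself \<Rightarrow> bool" where
  "hereditary R tm tn \<longleftrightarrow> left_hereditary R tm tn \<and> left_hereditary (opposite_ring R) tm tn"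

end

theory Submission
  imports Defs "HOL-Library.List_Lexorder" "HOL-Library.Product_Lexorder" "HOL-Library.Sublist"
begin

(*
  Since Q is acyclic it has only finitely many paths, and K_sigma Q is the free left K-module on
  them. Order the paths by length and then lexicographically; this order is compatible with
  concatenation, so the leading path of a product r u (the paths of r ending where those of u
  start) is the concatenation of the leading paths of r and u.

  Let I be a left ideal and let B be the set of leading paths of nonzero elements of I that have no
  proper right factor which is again such a leading path. For q in B pick u_q in e_h(q) I with
  leading path q. Cancelling leading terms one at a time writes every x in I as a sum of r_q u_q
  with r_q in K_sigma Q e_h(q); the leading paths of the nonzero summands r_q u_q are pairwise
  distinct, so this decomposition is unique. Hence I is isomorphic to the direct sum of the
  K_sigma Q e_h(q), and is projective. Right ideals are treated in the same way with left factors,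
  generators in I e_t(q) and coefficients in e_t(q) K_sigma Q.
*)

section \<open>Ring automorphisms and path twists\<close>

lemma ring_automorphism_zero: "ring_automorphism f \<Longrightarrow> f 0 = 0"
  unfolding ring_automorphism_def by (metis add_cancel_right_right)

lemma ring_automorphism_uminus: "ring_automorphism f \<Longrightarrow> f (- x) = - f x"
  by (metis eq_neg_iff_add_eq_0 ring_automorphism_def ring_automorphism_zero)

lemma ring_automorphism_diff: "ring_automorphism f \<Longrightarrow> f (x - y) = f x - f y"
  by (metis diff_conv_add_uminus ring_automorphism_def ring_automorphism_uminus)

lemma ring_automorphism_sum: "ring_automorphism f \<Longrightarrow> f (sum g A) = (\<Sum>a\<in>A. f (g a))"
  by (induction A rule: infinite_finite_induct)
    (auto simp: ring_automorphism_zero ring_automorphism_def)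

lemma ring_automorphism_eq_zero_iff: "ring_automorphism f \<Longrightarrow> f x = 0 \<longleftrightarrow> x = 0"
  by (metis bij_is_inj inj_eq ring_automorphism_def ring_automorphism_zero)

lemma ring_automorphism_comp:
  "ring_automorphism f \<Longrightarrow> ring_automorphism g \<Longrightarrow> ring_automorphism (f \<circ> g)"
  unfolding ring_automorphism_def by (auto intro: bij_comp)

lemma ring_automorphism_path_sigma:
  assumes "\<forall>a\<in>set (snd p). ring_automorphism (\<sigma> a)"
  shows "ring_automorphism (path_sigma \<sigma> p)"
proof -
  have "ring_automorphism (foldr (\<lambda>a f. \<sigma> a \<circ> f) as id)"
    if "\<forall>a\<in>set as. ring_automorphism (\<sigma> a)" for as
    using that by (induction as) (auto intro: ring_automorphism_comp simp: ring_automorphism_def[of id])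
  then show ?thesis
    using assms unfolding path_sigma_def by blast
qed

lemma path_sigma_cat:
  fixes \<sigma> :: "'e \<Rightarrow> 'k \<Rightarrow> 'k"
  shows "path_sigma \<sigma> (path_cat p q) = path_sigma \<sigma> p \<circ> path_sigma \<sigma> q"
proof -
  have foldr_comp: "foldr (\<lambda>a f. \<sigma> a \<circ> f) xs g = foldr (\<lambda>a f. \<sigma> a \<circ> f) xs id \<circ> g"
    for xs and g :: "'k \<Rightarrow> 'k"
    by (induction xs) auto
  have "path_sigma \<sigma> (path_cat p q) = foldr (\<lambda>a f. \<sigma> a \<circ> f) (snd p) (path_sigma \<sigma> q)"
    unfolding path_sigma_def path_cat_def by simp
  also have "\<dots> = path_sigma \<sigma> p \<circ> path_sigma \<sigma> q"
    unfolding path_sigma_def by (rule foldr_comp)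
  finally show ?thesis .
qed

lemma path_sigma_trivial: "snd p = [] \<Longrightarrow> path_sigma \<sigma> p = id"
  unfolding path_sigma_def by simp

section \<open>Opposite rings and projective left ideals\<close>

lemma finsum_opposite_ring: "finsum (opposite_ring R) = finsum R"
  unfolding finsum_def opposite_ring_def by simp

lemma additive_subgroup_opposite_ring_iff: "additive_subgroup I (opposite_ring R) \<longleftrightarrow> additive_subgroup I R"
  unfolding additive_subgroup_def opposite_ring_def by simp

lemma opposite_ring_simps [simp]:
  "carrier (opposite_ring R) = carrier R" "x \<otimes>\<^bsub>opposite_ring R\<^esub> y = y \<otimes>\<^bsub>R\<^esub> x"
  "x \<oplus>\<^bsub>opposite_ring R\<^esub> y = x \<oplus>\<^bsub>R\<^esub> y" "\<one>\<^bsub>opposite_ring R\<^esub> = \<one>\<^bsub>R\<^esub>" "\<zero>\<^bsub>opposite_ring R\<^esub> = \<zero>\<^bsub>R\<^esub>"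
  unfolding opposite_ring_def by simp_all

lemma ring_opposite_ring:
  fixes R :: "'a ring" (structure)
  assumes "ring R"
  shows "ring (opposite_ring R)"
proof -
  interpret ring R by fact
  show ?thesis
    by (rule ringI)
      (auto intro!: abelian_groupI monoidI bexI[of _ "\<ominus> _"] simp: a_ac m_assoc l_distr r_distr l_neg r_neg)
qed

lemma lmodule_smult_zero:
  assumes M: "lmodule R M" and a: "a \<in> carrier R"
  shows "a \<odot>\<^bsub>M\<^esub> \<zero>\<^bsub>M\<^esub> = \<zero>\<^bsub>M\<^esub>"
proof -
  interpret M: abelian_group M
    using M unfolding lmodule_def by blast
  have closed: "a \<odot>\<^bsub>M\<^esub> \<zero>\<^bsub>M\<^esub> \<in> carrier M"
    using M a unfolding lmodule_def by blast
  have "a \<odot>\<^bsub>M\<^esub> \<zero>\<^bsub>M\<^esub> \<oplus>\<^bsub>M\<^esub> a \<odot>\<^bsub>M\<^esub> \<zero>\<^bsub>M\<^esub> = a \<odot>\<^bsub>M\<^esub> \<zero>\<^bsub>M\<^esub> \<oplus>\<^bsub>M\<^esub> \<zero>\<^bsub>M\<^esub>"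
    using M a closed unfolding lmodule_def by (metis M.r_zero M.zero_closed)
  then show ?thesis
    using closed by (simp del: M.r_zero)
qed

lemma lmodule_smult_finsum:
  assumes M: "lmodule R M" and a: "a \<in> carrier R" and "finite B" and "F \<in> B \<rightarrow> carrier M"
  shows "a \<odot>\<^bsub>M\<^esub> (\<Oplus>\<^bsub>M\<^esub>i\<in>B. F i) = (\<Oplus>\<^bsub>M\<^esub>i\<in>B. a \<odot>\<^bsub>M\<^esub> F i)"
proof -
  interpret M: abelian_group M
    using M unfolding lmodule_def by blast
  have smult: "\<And>x. x \<in> carrier M \<Longrightarrow> a \<odot>\<^bsub>M\<^esub> x \<in> carrier M"
    "\<And>x y. x \<in> carrier M \<Longrightarrow> y \<in> carrier M \<Longrightarrow>
      a \<odot>\<^bsub>M\<^esub> (x \<oplus>\<^bsub>M\<^esub> y) = a \<odot>\<^bsub>M\<^esub> x \<oplus>\<^bsub>M\<^esub> a \<odot>\<^bsub>M\<^esub> y"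
    using M a unfolding lmodule_def by blast+
  show ?thesis
    using \<open>finite B\<close> \<open>F \<in> B \<rightarrow> carrier M\<close>
    by (induction B rule: finite_induct)
      (simp_all add: lmodule_smult_zero[OF M a] smult Pi_iff)
qed

lemma additive_finsum:
  assumes M: "abelian_group M" and N: "abelian_group N"
    and S: "\<zero>\<^bsub>M\<^esub> \<in> S" "\<And>x y. x \<in> S \<Longrightarrow> y \<in> S \<Longrightarrow> x \<oplus>\<^bsub>M\<^esub> y \<in> S" "S \<subseteq> carrier M"
    and f: "f \<in> S \<rightarrow> carrier N" "\<And>x y. x \<in> S \<Longrightarrow> y \<in> S \<Longrightarrow> f (x \<oplus>\<^bsub>M\<^esub> y) = f x \<oplus>\<^bsub>N\<^esub> f y"
    and "finite B" and "F \<in> B \<rightarrow> S"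
  shows "f (\<Oplus>\<^bsub>M\<^esub>i\<in>B. F i) = (\<Oplus>\<^bsub>N\<^esub>i\<in>B. f (F i))"
proof -
  interpret M: abelian_group M by fact
  interpret N: abelian_group N by fact
  have "(\<Oplus>\<^bsub>M\<^esub>i\<in>B. F i) \<in> S \<and> f (\<Oplus>\<^bsub>M\<^esub>i\<in>B. F i) = (\<Oplus>\<^bsub>N\<^esub>i\<in>B. f (F i))"
    using \<open>finite B\<close> \<open>F \<in> B \<rightarrow> S\<close>
  proof (induction B rule: finite_induct)
    case empty
    have "f \<zero>\<^bsub>M\<^esub> \<in> carrier N" "f \<zero>\<^bsub>M\<^esub> \<oplus>\<^bsub>N\<^esub> f \<zero>\<^bsub>M\<^esub> = f \<zero>\<^bsub>M\<^esub>"
      using f S f(2)[OF S(1) S(1)] by auto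
    then have "f \<zero>\<^bsub>M\<^esub> = \<zero>\<^bsub>N\<^esub>"
      using N.add.l_cancel_one by blast
    then show ?case
      using S by simp
  next
    case (insert i B)
    then have "F i \<in> S" "F \<in> B \<rightarrow> S" "(\<Oplus>\<^bsub>M\<^esub>i\<in>B. F i) \<in> S"
      "f (\<Oplus>\<^bsub>M\<^esub>i\<in>B. F i) = (\<Oplus>\<^bsub>N\<^esub>i\<in>B. f (F i))"
      by auto
    moreover have "(\<lambda>i. f (F i)) \<in> B \<rightarrow> carrier N" "f (F i) \<in> carrier N"
      "F \<in> B \<rightarrow> carrier M" "F i \<in> carrier M"
      using \<open>F i \<in> S\<close> \<open>F \<in> B \<rightarrow> S\<close> f S by auto
    ultimately show ?case
      using insert.hyps S f by simp
  qed
  then show ?thesis ..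
qed

lemma lmodule_ideal_lmod:
  fixes R (structure)
  assumes R: "ring R" and I: "left_ideal I R"
  shows "lmodule R (ideal_lmod R I)"
proof -
  interpret ring R by fact
  have sg: "additive_subgroup I R" and closed: "\<And>a x. a \<in> I \<Longrightarrow> x \<in> carrier R \<Longrightarrow> x \<otimes> a \<in> I"
    using I unfolding left_ideal_def by auto
  have sub: "I \<subseteq> carrier R"
    using additive_subgroup.a_subset[OF sg] .
  have "abelian_group (ideal_lmod R I)"
  proof (rule abelian_groupI)
    fix x y z
    assume "x \<in> carrier (ideal_lmod R I)" "y \<in> carrier (ideal_lmod R I)" "z \<in> carrier (ideal_lmod R I)"
    then have "x \<in> I" "y \<in> I" "z \<in> I"
      by (simp_all add: ideal_lmod_def)
    then show "x \<oplus>\<^bsub>ideal_lmod R I\<^esub> y \<in> carrier (ideal_lmod R I)"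
      "x \<oplus>\<^bsub>ideal_lmod R I\<^esub> y \<oplus>\<^bsub>ideal_lmod R I\<^esub> z = x \<oplus>\<^bsub>ideal_lmod R I\<^esub> (y \<oplus>\<^bsub>ideal_lmod R I\<^esub> z)"
      "x \<oplus>\<^bsub>ideal_lmod R I\<^esub> y = y \<oplus>\<^bsub>ideal_lmod R I\<^esub> x"
      "\<zero>\<^bsub>ideal_lmod R I\<^esub> \<oplus>\<^bsub>ideal_lmod R I\<^esub> x = x"
      "\<exists>y\<in>carrier (ideal_lmod R I). y \<oplus>\<^bsub>ideal_lmod R I\<^esub> x = \<zero>\<^bsub>ideal_lmod R I\<^esub>"
      using sub additive_subgroup.a_closed[OF sg] additive_subgroup.a_inv_closed[OF sg]
      by (auto simp: ideal_lmod_def subsetD a_ac intro!: bexI[of _ "\<ominus> x"] l_neg)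
  qed (simp add: ideal_lmod_def additive_subgroup.zero_closed[OF sg])
  then show ?thesis
    unfolding lmodule_def using R sub closed
    by (auto simp: ideal_lmod_def intro: l_distr r_distr m_assoc)
qed

lemma unique_decomposition_coordinates:
  fixes R (structure)
  assumes R: "ring R" and I: "left_ideal I R" and fin: "finite B" and u: "\<forall>i\<in>B. u i \<in> carrier R"
    and A: "\<forall>i\<in>B. A i \<subseteq> carrier R"
    and A_add: "\<forall>i\<in>B. \<forall>a\<in>A i. \<forall>b\<in>A i. a \<oplus> b \<in> A i"
    and A_mult: "\<forall>i\<in>B. \<forall>a\<in>A i. \<forall>c\<in>carrier R. c \<otimes> a \<in> A i"
    and ex: "\<forall>x\<in>I. \<exists>r. (\<forall>i\<in>B. r i \<in> A i) \<and> x = (\<Oplus>i\<in>B. r i \<otimes> u i)"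
    and uniq: "\<forall>r r'. (\<forall>i\<in>B. r i \<in> A i) \<longrightarrow> (\<forall>i\<in>B. r' i \<in> A i) \<longrightarrow>
        (\<Oplus>i\<in>B. r i \<otimes> u i) = (\<Oplus>i\<in>B. r' i \<otimes> u i) \<longrightarrow> (\<forall>i\<in>B. r i = r' i)"
  obtains co where "\<And>x i. x \<in> I \<Longrightarrow> i \<in> B \<Longrightarrow> co x i \<in> A i"
    and "\<And>x. x \<in> I \<Longrightarrow> x = (\<Oplus>i\<in>B. co x i \<otimes> u i)"
    and "\<And>x y i. x \<in> I \<Longrightarrow> y \<in> I \<Longrightarrow> i \<in> B \<Longrightarrow> co (x \<oplus> y) i = co x i \<oplus> co y i"
    and "\<And>a x i. a \<in> carrier R \<Longrightarrow> x \<in> I \<Longrightarrow> i \<in> B \<Longrightarrow> co (a \<otimes> x) i = a \<otimes> co x i"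
proof -
  interpret ring R by fact
  have sg: "additive_subgroup I R" and closed: "\<And>a x. a \<in> I \<Longrightarrow> x \<in> carrier R \<Longrightarrow> x \<otimes> a \<in> I"
    using I unfolding left_ideal_def by auto
  define co where "co x = (SOME r. (\<forall>i\<in>B. r i \<in> A i) \<and> x = (\<Oplus>i\<in>B. r i \<otimes> u i))" for x
  have co: "(\<forall>i\<in>B. co x i \<in> A i) \<and> x = (\<Oplus>i\<in>B. co x i \<otimes> u i)" if "x \<in> I" for x
  proof -
    have "\<exists>r. (\<forall>i\<in>B. r i \<in> A i) \<and> x = (\<Oplus>i\<in>B. r i \<otimes> u i)"
      using ex that by blast
    then show ?thesis
      unfolding co_def by (rule someI_ex)
  qed
  then have co_A: "\<And>x i. x \<in> I \<Longrightarrow> i \<in> B \<Longrightarrow> co x i \<in> A i"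
    and co_sum: "\<And>x. x \<in> I \<Longrightarrow> x = (\<Oplus>i\<in>B. co x i \<otimes> u i)"
    by blast+
  have co_carrier: "\<And>x i. x \<in> I \<Longrightarrow> i \<in> B \<Longrightarrow> co x i \<in> carrier R"
    using co_A A by blast
  have co_add: "co (x \<oplus> y) i = co x i \<oplus> co y i" if "x \<in> I" "y \<in> I" "i \<in> B" for x y i
  proof -
    have xy: "x \<oplus> y \<in> I"
      using additive_subgroup.a_closed[OF sg that(1,2)] .
    have "(\<Oplus>i\<in>B. (co x i \<oplus> co y i) \<otimes> u i) = (\<Oplus>i\<in>B. co x i \<otimes> u i \<oplus> co y i \<otimes> u i)"
      using co_carrier that u by (intro finsum_cong') (auto simp: l_distr)
    also have "\<dots> = (\<Oplus>i\<in>B. co x i \<otimes> u i) \<oplus> (\<Oplus>i\<in>B. co y i \<otimes> u i)"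
      using co_carrier that u by (intro finsum_addf) auto
    also have "\<dots> = (\<Oplus>i\<in>B. co (x \<oplus> y) i \<otimes> u i)"
      using co_sum[OF xy] co_sum that by simp
    finally have "\<forall>i\<in>B. co x i \<oplus> co y i = co (x \<oplus> y) i"
      using uniq[rule_format, of "\<lambda>i. co x i \<oplus> co y i" "co (x \<oplus> y)"] co_A A_add that xy by blast
    then show ?thesis
      using that by simp
  qed
  have co_mult: "co (a \<otimes> x) i = a \<otimes> co x i" if "a \<in> carrier R" "x \<in> I" "i \<in> B" for a x i
  proof -
    have ax: "a \<otimes> x \<in> I"
      using closed that by blast
    have "(\<Oplus>i\<in>B. (a \<otimes> co x i) \<otimes> u i) = (\<Oplus>i\<in>B. a \<otimes> (co x i \<otimes> u i))"
      using co_carrier that u by (intro finsum_cong') (auto simp: m_assoc)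
    also have "\<dots> = a \<otimes> (\<Oplus>i\<in>B. co x i \<otimes> u i)"
      using co_carrier that u fin by (intro finsum_rdistr[symmetric]) auto
    also have "\<dots> = (\<Oplus>i\<in>B. co (a \<otimes> x) i \<otimes> u i)"
      using co_sum[OF ax] co_sum that by simp
    finally have "\<forall>i\<in>B. a \<otimes> co x i = co (a \<otimes> x) i"
      using uniq[rule_format, of "\<lambda>i. a \<otimes> co x i" "co (a \<otimes> x)"] co_A A_mult that ax by blast
    then show ?thesis
      using that by simp
  qed
  show ?thesis
    using that[of co] co_A co_sum co_add co_mult by blast
qed

lemma lmod_hom_finsum_smult:
  assumes M: "lmodule R M" and N: "lmodule R N" and g: "g \<in> lmod_hom R M N"
    and "finite B" and m: "m \<in> B \<rightarrow> carrier M" and r: "r \<in> B \<rightarrow> carrier R"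
  shows "g (\<Oplus>\<^bsub>M\<^esub>i\<in>B. r i \<odot>\<^bsub>M\<^esub> m i) = (\<Oplus>\<^bsub>N\<^esub>i\<in>B. r i \<odot>\<^bsub>N\<^esub> g (m i))"
proof -
  interpret M: abelian_group M
    using M unfolding lmodule_def by blast
  interpret N: abelian_group N
    using N unfolding lmodule_def by blast
  have g_carrier: "g \<in> carrier M \<rightarrow> carrier N"
    and g_add: "\<And>x y. x \<in> carrier M \<Longrightarrow> y \<in> carrier M \<Longrightarrow> g (x \<oplus>\<^bsub>M\<^esub> y) = g x \<oplus>\<^bsub>N\<^esub> g y"
    and g_smult: "\<And>a x. a \<in> carrier R \<Longrightarrow> x \<in> carrier M \<Longrightarrow> g (a \<odot>\<^bsub>M\<^esub> x) = a \<odot>\<^bsub>N\<^esub> g x"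
    using g unfolding lmod_hom_def by blast+
  have smult_M: "\<And>a x. a \<in> carrier R \<Longrightarrow> x \<in> carrier M \<Longrightarrow> a \<odot>\<^bsub>M\<^esub> x \<in> carrier M"
    using M unfolding lmodule_def by blast
  have smult_N: "\<And>a x. a \<in> carrier R \<Longrightarrow> x \<in> carrier N \<Longrightarrow> a \<odot>\<^bsub>N\<^esub> x \<in> carrier N"
    using N unfolding lmodule_def by blast
  have "g (\<Oplus>\<^bsub>M\<^esub>i\<in>B. r i \<odot>\<^bsub>M\<^esub> m i) = (\<Oplus>\<^bsub>N\<^esub>i\<in>B. g (r i \<odot>\<^bsub>M\<^esub> m i))"
    using g_carrier g_add \<open>finite B\<close> m r smult_M
    by (intro additive_finsum[OF M.abelian_group_axioms N.abelian_group_axioms, where S = "carrier M"])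
      (auto simp: Pi_iff)
  also have "\<dots> = (\<Oplus>\<^bsub>N\<^esub>i\<in>B. r i \<odot>\<^bsub>N\<^esub> g (m i))"
    using m r g_carrier by (intro N.finsum_cong') (auto simp: g_smult smult_N Pi_iff)
  finally show ?thesis .
qed

lemma lmod_hom_ideal_finsum:
  fixes R :: "'a ring" (structure)
  assumes R: "ring R" and I: "left_ideal I R" and N: "lmodule R N"
    and f: "f \<in> lmod_hom R (ideal_lmod R I) N"
    and "finite B" and u: "u \<in> B \<rightarrow> I" and r: "r \<in> B \<rightarrow> carrier R"
  shows "f (\<Oplus>i\<in>B. r i \<otimes> u i) = (\<Oplus>\<^bsub>N\<^esub>i\<in>B. r i \<odot>\<^bsub>N\<^esub> f (u i))"
proof -
  interpret ring R by fact
  interpret N: abelian_group N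
    using N unfolding lmodule_def by blast
  interpret I: additive_subgroup I R
    using I unfolding left_ideal_def by blast
  have closed: "\<And>a x. a \<in> carrier R \<Longrightarrow> x \<in> I \<Longrightarrow> a \<otimes> x \<in> I"
    using I unfolding left_ideal_def by blast
  have f_carrier: "f \<in> I \<rightarrow> carrier N"
    and f_add: "\<And>x y. x \<in> I \<Longrightarrow> y \<in> I \<Longrightarrow> f (x \<oplus> y) = f x \<oplus>\<^bsub>N\<^esub> f y"
    and f_smult: "\<And>a x. a \<in> carrier R \<Longrightarrow> x \<in> I \<Longrightarrow> f (a \<otimes> x) = a \<odot>\<^bsub>N\<^esub> f x"
    using f unfolding lmod_hom_def ideal_lmod_def by auto
  have smult_N: "\<And>a x. a \<in> carrier R \<Longrightarrow> x \<in> carrier N \<Longrightarrow> a \<odot>\<^bsub>N\<^esub> x \<in> carrier N"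
    using N unfolding lmodule_def by blast
  have "f (\<Oplus>i\<in>B. r i \<otimes> u i) = (\<Oplus>\<^bsub>N\<^esub>i\<in>B. f (r i \<otimes> u i))"
    using f_carrier f_add \<open>finite B\<close> u r closed I.a_subset
    by (intro additive_finsum[OF abelian_group_axioms N.abelian_group_axioms, where S = I]) (auto simp: Pi_iff)
  also have "\<dots> = (\<Oplus>\<^bsub>N\<^esub>i\<in>B. r i \<odot>\<^bsub>N\<^esub> f (u i))"
    using u r f_carrier closed by (intro N.finsum_cong') (auto simp: f_smult smult_N Pi_iff)
  finally show ?thesis .
qed

lemma coordinate_lift_lmod_hom:
  fixes R :: "'a ring" (structure)
  assumes M: "lmodule R M" and "finite B" and m: "m \<in> B \<rightarrow> carrier M"
    and co_carrier: "\<And>x i. x \<in> I \<Longrightarrow> i \<in> B \<Longrightarrow> co x i \<in> carrier R"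
    and co_add: "\<And>x y i. x \<in> I \<Longrightarrow> y \<in> I \<Longrightarrow> i \<in> B \<Longrightarrow> co (x \<oplus> y) i = co x i \<oplus> co y i"
    and co_mult: "\<And>a x i. a \<in> carrier R \<Longrightarrow> x \<in> I \<Longrightarrow> i \<in> B \<Longrightarrow> co (a \<otimes> x) i = a \<otimes> co x i"
  shows "(\<lambda>x. \<Oplus>\<^bsub>M\<^esub>i\<in>B. co x i \<odot>\<^bsub>M\<^esub> m i) \<in> lmod_hom R (ideal_lmod R I) M"
proof -
  interpret M: abelian_group M
    using M unfolding lmodule_def by blast
  have smult: "\<And>a x. a \<in> carrier R \<Longrightarrow> x \<in> carrier M \<Longrightarrow> a \<odot>\<^bsub>M\<^esub> x \<in> carrier M"
    and add_smult: "\<And>a b x. a \<in> carrier R \<Longrightarrow> b \<in> carrier R \<Longrightarrow> x \<in> carrier M \<Longrightarrow>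
      (a \<oplus> b) \<odot>\<^bsub>M\<^esub> x = a \<odot>\<^bsub>M\<^esub> x \<oplus>\<^bsub>M\<^esub> b \<odot>\<^bsub>M\<^esub> x"
    and mult_smult: "\<And>a b x. a \<in> carrier R \<Longrightarrow> b \<in> carrier R \<Longrightarrow> x \<in> carrier M \<Longrightarrow>
      (a \<otimes> b) \<odot>\<^bsub>M\<^esub> x = a \<odot>\<^bsub>M\<^esub> (b \<odot>\<^bsub>M\<^esub> x)"
    using M unfolding lmodule_def by blast+
  have m_carrier: "\<And>i. i \<in> B \<Longrightarrow> m i \<in> carrier M"
    using m by auto
  have terms: "(\<lambda>i. co x i \<odot>\<^bsub>M\<^esub> m i) \<in> B \<rightarrow> carrier M" if "x \<in> I" for x
    using co_carrier[OF that] m_carrier smult by auto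
  show ?thesis
    unfolding lmod_hom_def
  proof (intro CollectI conjI ballI)
    show "(\<lambda>x. \<Oplus>\<^bsub>M\<^esub>i\<in>B. co x i \<odot>\<^bsub>M\<^esub> m i) \<in> carrier (ideal_lmod R I) \<rightarrow> carrier M"
      using terms unfolding ideal_lmod_def by auto
    fix x y assume "x \<in> carrier (ideal_lmod R I)" "y \<in> carrier (ideal_lmod R I)"
    then have x: "x \<in> I" and y: "y \<in> I"
      by (simp_all add: ideal_lmod_def)
    have "(\<Oplus>\<^bsub>M\<^esub>i\<in>B. co (x \<oplus> y) i \<odot>\<^bsub>M\<^esub> m i) = (\<Oplus>\<^bsub>M\<^esub>i\<in>B. co x i \<odot>\<^bsub>M\<^esub> m i \<oplus>\<^bsub>M\<^esub> co y i \<odot>\<^bsub>M\<^esub> m i)"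
      using x y m_carrier co_carrier by (intro M.finsum_cong') (auto simp: co_add add_smult smult)
    also have "\<dots> = (\<Oplus>\<^bsub>M\<^esub>i\<in>B. co x i \<odot>\<^bsub>M\<^esub> m i) \<oplus>\<^bsub>M\<^esub> (\<Oplus>\<^bsub>M\<^esub>i\<in>B. co y i \<odot>\<^bsub>M\<^esub> m i)"
      using terms x y by (intro M.finsum_addf) auto
    finally show "(\<Oplus>\<^bsub>M\<^esub>i\<in>B. co (x \<oplus>\<^bsub>ideal_lmod R I\<^esub> y) i \<odot>\<^bsub>M\<^esub> m i) =
        (\<Oplus>\<^bsub>M\<^esub>i\<in>B. co x i \<odot>\<^bsub>M\<^esub> m i) \<oplus>\<^bsub>M\<^esub> (\<Oplus>\<^bsub>M\<^esub>i\<in>B. co y i \<odot>\<^bsub>M\<^esub> m i)"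
      by (simp add: ideal_lmod_def)
  next
    fix a x assume a: "a \<in> carrier R" and "x \<in> carrier (ideal_lmod R I)"
    then have x: "x \<in> I"
      by (simp add: ideal_lmod_def)
    have "(\<Oplus>\<^bsub>M\<^esub>i\<in>B. co (a \<otimes> x) i \<odot>\<^bsub>M\<^esub> m i) = (\<Oplus>\<^bsub>M\<^esub>i\<in>B. a \<odot>\<^bsub>M\<^esub> (co x i \<odot>\<^bsub>M\<^esub> m i))"
      using x a m_carrier co_carrier by (intro M.finsum_cong') (auto simp: co_mult mult_smult smult)
    also have "\<dots> = a \<odot>\<^bsub>M\<^esub> (\<Oplus>\<^bsub>M\<^esub>i\<in>B. co x i \<odot>\<^bsub>M\<^esub> m i)"
      using terms[OF x] a \<open>finite B\<close> by (intro lmodule_smult_finsum[OF M, symmetric])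
    finally show "(\<Oplus>\<^bsub>M\<^esub>i\<in>B. co (a \<odot>\<^bsub>ideal_lmod R I\<^esub> x) i \<odot>\<^bsub>M\<^esub> m i) =
        a \<odot>\<^bsub>M\<^esub> (\<Oplus>\<^bsub>M\<^esub>i\<in>B. co x i \<odot>\<^bsub>M\<^esub> m i)"
      by (simp add: ideal_lmod_def)
  qed
qed

text \<open>The hypotheses say that \<open>I\<close> is the internal direct sum of the \<open>A\<^sub>i u\<^sub>i\<close>, with
  \<open>r \<mapsto> r u\<^sub>i\<close> injective on \<open>A\<^sub>i\<close>.\<close>

lemma projective_ideal_lmodI:
  fixes R :: "'a ring" (structure)
  assumes R: "ring R" and I: "left_ideal I R" and fin: "finite B" and u: "\<forall>i\<in>B. u i \<in> I"
    and A: "\<forall>i\<in>B. A i \<subseteq> carrier R"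
    and A_add: "\<forall>i\<in>B. \<forall>a\<in>A i. \<forall>b\<in>A i. a \<oplus> b \<in> A i"
    and A_mult: "\<forall>i\<in>B. \<forall>a\<in>A i. \<forall>c\<in>carrier R. c \<otimes> a \<in> A i"
    and ex: "\<forall>x\<in>I. \<exists>r. (\<forall>i\<in>B. r i \<in> A i) \<and> x = (\<Oplus>i\<in>B. r i \<otimes> u i)"
    and uniq: "\<forall>r r'. (\<forall>i\<in>B. r i \<in> A i) \<longrightarrow> (\<forall>i\<in>B. r' i \<in> A i) \<longrightarrow>
        (\<Oplus>i\<in>B. r i \<otimes> u i) = (\<Oplus>i\<in>B. r' i \<otimes> u i) \<longrightarrow> (\<forall>i\<in>B. r i = r' i)"
  shows "projective_lmod R (ideal_lmod R I) TYPE('m) TYPE('n)"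
proof -
  have "u i \<in> carrier R" if "i \<in> B" for i
    using u I that additive_subgroup.a_subset unfolding left_ideal_def by blast
  then obtain co where co_A: "\<And>x i. x \<in> I \<Longrightarrow> i \<in> B \<Longrightarrow> co x i \<in> A i"
    and co_sum: "\<And>x. x \<in> I \<Longrightarrow> x = (\<Oplus>i\<in>B. co x i \<otimes> u i)"
    and co_add: "\<And>x y i. x \<in> I \<Longrightarrow> y \<in> I \<Longrightarrow> i \<in> B \<Longrightarrow> co (x \<oplus> y) i = co x i \<oplus> co y i"
    and co_mult: "\<And>a x i. a \<in> carrier R \<Longrightarrow> x \<in> I \<Longrightarrow> i \<in> B \<Longrightarrow> co (a \<otimes> x) i = a \<otimes> co x i"
    using unique_decomposition_coordinates[OF R I fin _ A A_add A_mult ex uniq] by blast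
  have co_carrier: "\<And>x i. x \<in> I \<Longrightarrow> i \<in> B \<Longrightarrow> co x i \<in> carrier R"
    using co_A A by blast
  show ?thesis
    unfolding projective_lmod_def
  proof (intro conjI allI impI ballI)
    show "lmodule R (ideal_lmod R I)"
      by (rule lmodule_ideal_lmod[OF R I])
    fix M :: "('a, 'm) module" and N :: "('a, 'n) module" and g f
    assume "lmodule R M \<and> lmodule R N"
    then have M: "lmodule R M" and N: "lmodule R N"
      by auto
    assume g: "g \<in> lmod_hom R M N" and g_onto: "g ` carrier M = carrier N"
      and f: "f \<in> lmod_hom R (ideal_lmod R I) N"
    have "f (u i) \<in> g ` carrier M" if "i \<in> B" for i
      using g_onto f u that unfolding lmod_hom_def ideal_lmod_def by auto
    then have "\<forall>i\<in>B. \<exists>y. y \<in> carrier M \<and> g y = f (u i)"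
      by (metis imageE)
    then obtain m where m: "\<And>i. i \<in> B \<Longrightarrow> m i \<in> carrier M \<and> g (m i) = f (u i)"
      using bchoice[of B "\<lambda>i y. y \<in> carrier M \<and> g y = f (u i)"] by blast
    define h where "h x = (\<Oplus>\<^bsub>M\<^esub>i\<in>B. co x i \<odot>\<^bsub>M\<^esub> m i)" for x
    have "h \<in> lmod_hom R (ideal_lmod R I) M"
      unfolding h_def using m co_carrier co_add co_mult by (intro coordinate_lift_lmod_hom[OF M fin]) auto
    moreover have "g (h x) = f x" if "x \<in> carrier (ideal_lmod R I)" for x
    proof -
      have x: "x \<in> I"
        using that by (simp add: ideal_lmod_def)
      interpret N: abelian_group N
        using N unfolding lmodule_def by blast
      have "g (h x) = (\<Oplus>\<^bsub>N\<^esub>i\<in>B. co x i \<odot>\<^bsub>N\<^esub> g (m i))"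
        unfolding h_def using m co_carrier[OF x] by (intro lmod_hom_finsum_smult[OF M N g fin]) auto
      also have "\<dots> = (\<Oplus>\<^bsub>N\<^esub>i\<in>B. co x i \<odot>\<^bsub>N\<^esub> f (u i))"
      proof (intro N.finsum_cong')
        have "f (u i) \<in> carrier N" if "i \<in> B" for i
          using f u that unfolding lmod_hom_def ideal_lmod_def by auto
        then show "(\<lambda>i. co x i \<odot>\<^bsub>N\<^esub> f (u i)) \<in> B \<rightarrow> carrier N"
          using co_carrier[OF x] N unfolding lmodule_def by blast
      qed (use m in auto)
      also have "\<dots> = f (\<Oplus>i\<in>B. co x i \<otimes> u i)"
        using co_carrier[OF x] u by (intro lmod_hom_ideal_finsum[OF R I N f fin, symmetric]) auto
      also have "\<dots> = f x"
        by (simp only: co_sum[OF x, symmetric])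
      finally show ?thesis .
    qed
    ultimately show "\<exists>h\<in>lmod_hom R (ideal_lmod R I) M. \<forall>x\<in>carrier (ideal_lmod R I). g (h x) = f x"
      by blast
  qed
qed

definition minimal_wrt :: "('a \<Rightarrow> 'a \<Rightarrow> bool) \<Rightarrow> 'a set \<Rightarrow> 'a set"
  where "minimal_wrt rel S = {q \<in> S. \<forall>q'\<in>S. rel q' q \<longrightarrow> q' = q}"

lemma exists_minimal_wrt_below:
  fixes f :: "'a \<Rightarrow> nat"
  assumes refl: "\<And>a. a \<in> S \<Longrightarrow> rel a a"
    and trans: "\<And>a b c. a \<in> S \<Longrightarrow> b \<in> S \<Longrightarrow> c \<in> S \<Longrightarrow> rel a b \<Longrightarrow> rel b c \<Longrightarrow> rel a c"
    and decreasing: "\<And>a b. a \<in> S \<Longrightarrow> b \<in> S \<Longrightarrow> rel a b \<Longrightarrow> a \<noteq> b \<Longrightarrow> f a < f b"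
    and "m \<in> S"
  shows "\<exists>q\<in>minimal_wrt rel S. rel q m"
  using \<open>m \<in> S\<close>
proof (induction "f m" arbitrary: m rule: less_induct)
  case less
  show ?case
  proof (cases "m \<in> minimal_wrt rel S")
    case True
    then show ?thesis
      using refl less.prems by blast
  next
    case False
    then obtain m' where "m' \<in> S" "rel m' m" "m' \<noteq> m"
      using less.prems unfolding minimal_wrt_def by blast
    moreover obtain q where "q \<in> minimal_wrt rel S" "rel q m'"
      using less.hyps[OF decreasing] calculation less.prems by blast
    ultimately show ?thesis
      using trans less.prems unfolding minimal_wrt_def by blast
  qed
qed

lemma if_zero_mult_left: "(if c then a else 0) * b = (if c then a * b else (0::'a::mult_zero))"
  and if_zero_mult_right: "b * (if c then a else 0) = (if c then b * a else (0::'a::mult_zero))"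
  by simp_all

lemma sum_sum_delta:
  fixes c :: "'c::comm_monoid_add"
  assumes "finite A" "finite B" "a \<in> A" "b \<in> B"
  shows "(\<Sum>x\<in>A. \<Sum>y\<in>B. if x = a \<and> y = b then c else 0) = c"
proof -
  have "(\<Sum>x\<in>A. \<Sum>y\<in>B. if x = a \<and> y = b then c else 0) =
      (\<Sum>x\<in>A. if x = a then \<Sum>y\<in>B. if y = b then c else 0 else 0)"
    by (intro sum.cong) auto
  then show ?thesis
    using assms by simp
qed

lemma append_mono_same_length:
  fixes xs xs' ys ys' :: "'a::linorder list"
  assumes "length xs = length xs'" "xs \<le> xs'" "ys \<le> ys'"
  shows "xs @ ys \<le> xs' @ ys'"
  using assms
proof (induction xs arbitrary: xs')
  case (Cons x xs)
  then show ?case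
    by (cases xs') auto
qed simp

section \<open>Paths in an acyclic quiver\<close>

lemma composable_infix:
  "composable Q1 hd_q tl_q as \<Longrightarrow> composable Q1 hd_q tl_q (take k (drop i as))"
  unfolding composable_def by (auto dest: in_set_takeD in_set_dropD)

lemma composable_append_iff:
  "composable Q1 hd_q tl_q (xs @ ys) \<longleftrightarrow> composable Q1 hd_q tl_q xs \<and> composable Q1 hd_q tl_q ys \<and>
     (xs \<noteq> [] \<longrightarrow> ys \<noteq> [] \<longrightarrow> tl_q (last xs) = hd_q (hd ys))"
proof (intro iffI conjI impI)
  assume c: "composable Q1 hd_q tl_q (xs @ ys)"
  show "composable Q1 hd_q tl_q xs"
    using composable_infix[OF c, of "length xs" 0] by simp
  show "composable Q1 hd_q tl_q ys"
    using composable_infix[OF c, of "length ys" "length xs"] by simp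
  assume "xs \<noteq> []" "ys \<noteq> []"
  then have "Suc (length xs - 1) < length (xs @ ys)"
    "(xs @ ys) ! (length xs - 1) = last xs" "(xs @ ys) ! Suc (length xs - 1) = hd ys"
    by (auto simp: nth_append last_conv_nth hd_conv_nth)
  then show "tl_q (last xs) = hd_q (hd ys)"
    using c unfolding composable_def by metis
next
  assume c: "composable Q1 hd_q tl_q xs \<and> composable Q1 hd_q tl_q ys \<and>
    (xs \<noteq> [] \<longrightarrow> ys \<noteq> [] \<longrightarrow> tl_q (last xs) = hd_q (hd ys))"
  show "composable Q1 hd_q tl_q (xs @ ys)"
    unfolding composable_def
  proof (intro conjI allI impI)
    show "set (xs @ ys) \<subseteq> Q1"
      using c unfolding composable_def by auto
    fix i assume i: "Suc i < length (xs @ ys)"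
    consider "Suc i < length xs" | "Suc i = length xs" | "length xs \<le> i"
      by linarith
    then show "tl_q ((xs @ ys) ! i) = hd_q ((xs @ ys) ! Suc i)"
    proof cases
      case 1
      then show ?thesis
        using c unfolding composable_def by (simp add: nth_append)
    next
      case 2
      then have nonempty: "xs \<noteq> []" "ys \<noteq> []" and "i = length xs - 1"
        using i by auto
      then have "(xs @ ys) ! i = last xs" "(xs @ ys) ! Suc i = hd ys"
        by (auto simp: nth_append last_conv_nth hd_conv_nth)
      then show ?thesis
        using c nonempty by simp
    next
      case 3
      then have "Suc (i - length xs) < length ys" "Suc i - length xs = Suc (i - length xs)"
        using i by auto
      then show ?thesis
        using c 3 unfolding composable_def by (simp add: nth_append)
    qed
  qed
qed

text \<open>The vertices visited by a path in an acyclic quiver are pairwise distinct, since a repetition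
  would cut out an oriented cycle.\<close>

lemma acyclic_composable_length_less:
  assumes Q: "finite_quiver Q0 Q1 hd_q tl_q" and acyc: "acyclic_quiver Q1 hd_q tl_q"
    and c: "composable Q1 hd_q tl_q as" and "as \<noteq> []"
  shows "length as < card Q0"
proof -
  define n where "n = length as"
  define vertex where "vertex i = (if i < n then hd_q (as ! i) else tl_q (last as))" for i
  have arrows: "\<And>i. i < n \<Longrightarrow> as ! i \<in> Q1" "as \<noteq> [] \<Longrightarrow> last as \<in> Q1"
    using c unfolding composable_def n_def by auto
  have "vertex ` {0..n} \<subseteq> Q0"
    using Q arrows \<open>as \<noteq> []\<close> unfolding finite_quiver_def vertex_def by auto
  moreover have "inj_on vertex {0..n}"
  proof (rule ccontr)
    assume "\<not> inj_on vertex {0..n}"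
    then obtain i j where ij: "i < j" "j \<le> n" "vertex i = vertex j"
      unfolding inj_on_def by (metis atLeastAtMost_iff linorder_neqE_nat)
    define cycle where "cycle = take (j - i) (drop i as)"
    have "cycle \<noteq> []" "composable Q1 hd_q tl_q cycle"
      using ij composable_infix[OF c] unfolding cycle_def n_def by auto
    moreover have "hd_q (hd cycle) = vertex i"
      using ij unfolding cycle_def vertex_def n_def by (simp add: hd_conv_nth)
    moreover have "tl_q (last cycle) = vertex j"
    proof (cases "j < n")
      case True
      then have "tl_q (as ! (j - 1)) = hd_q (as ! Suc (j - 1))"
        using c ij unfolding composable_def n_def by auto
      then show ?thesis
        using True ij unfolding cycle_def vertex_def n_def by (simp add: last_conv_nth)
    next
      case False
      then show ?thesis
        using ij \<open>as \<noteq> []\<close> unfolding cycle_def vertex_def n_def by (auto simp: last_conv_nth)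
    qed
    ultimately show False
      using acyc ij(3) unfolding acyclic_quiver_def by metis
  qed
  ultimately have "card {0..n} \<le> card Q0"
    using Q unfolding finite_quiver_def by (metis card_inj_on_le)
  then show ?thesis
    unfolding n_def by simp
qed

locale semilinear_path_alg =
  fixes Q0 :: "'v set" and Q1 :: "'e set" and hd_q tl_q :: "'e \<Rightarrow> 'v"
    and \<sigma> :: "'e \<Rightarrow> 'k::division_ring \<Rightarrow> 'k"
  assumes finite_quiver: "finite_quiver Q0 Q1 hd_q tl_q"
    and automorphisms: "\<forall>a\<in>Q1. ring_automorphism (\<sigma> a)"
    and acyclic: "acyclic_quiver Q1 hd_q tl_q"
begin

abbreviation R :: "('v \<times> 'e list \<Rightarrow> 'k) ring"
  where "R \<equiv> semilinear_path_algebra Q0 Q1 hd_q tl_q \<sigma>"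

abbreviation ptl :: "'v \<times> 'e list \<Rightarrow> 'v"
  where "ptl \<equiv> path_tail tl_q"

abbreviation \<sigma>\<^sub>P :: "'v \<times> 'e list \<Rightarrow> 'k \<Rightarrow> 'k"
  where "\<sigma>\<^sub>P \<equiv> path_sigma \<sigma>"

definition paths :: "('v \<times> 'e list) set"
  where "paths = {p. valid_path Q0 Q1 hd_q tl_q p}"

lemma mem_paths_iff:
  "p \<in> paths \<longleftrightarrow> fst p \<in> Q0 \<and> composable Q1 hd_q tl_q (snd p) \<and> (snd p \<noteq> [] \<longrightarrow> fst p = hd_q (hd (snd p)))"
  unfolding paths_def valid_path_def by simp

lemma arrow_vertices: "a \<in> Q1 \<Longrightarrow> hd_q a \<in> Q0 \<and> tl_q a \<in> Q0"
  using finite_quiver unfolding finite_quiver_def by blast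

lemma finite_vertices: "finite Q0" and finite_arrows: "finite Q1"
  using finite_quiver unfolding finite_quiver_def by simp_all

lemma finite_paths: "finite paths"
proof (rule finite_subset)
  show "paths \<subseteq> Q0 \<times> {as. set as \<subseteq> Q1 \<and> length as \<le> card Q0}"
  proof
    fix p assume "p \<in> paths"
    then have "fst p \<in> Q0" "composable Q1 hd_q tl_q (snd p)"
      unfolding mem_paths_iff by auto
    moreover have "length (snd p) \<le> card Q0"
      using acyclic_composable_length_less[OF finite_quiver acyclic \<open>composable Q1 hd_q tl_q (snd p)\<close>]
      by (cases "snd p = []") auto
    ultimately show "p \<in> Q0 \<times> {as. set as \<subseteq> Q1 \<and> length as \<le> card Q0}"
      unfolding composable_def by (auto simp: mem_Times_iff)
  qed
  show "finite (Q0 \<times> {as. set as \<subseteq> Q1 \<and> length as \<le> card Q0})"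
    using finite_quiver finite_lists_length_le unfolding finite_quiver_def by blast
qed

lemma trivial_path_in_paths [simp]: "(v, []) \<in> paths \<longleftrightarrow> v \<in> Q0"
  unfolding mem_paths_iff composable_def by simp

lemma path_head_in_Q0: "p \<in> paths \<Longrightarrow> fst p \<in> Q0"
  unfolding mem_paths_iff by blast

lemma path_tail_in_Q0: "p \<in> paths \<Longrightarrow> ptl p \<in> Q0"
  using arrow_vertices unfolding mem_paths_iff path_tail_def composable_def by (auto dest: last_in_set)

lemma fst_path_cat [simp]: "fst (path_cat p s) = fst p"
  and snd_path_cat [simp]: "snd (path_cat p s) = snd p @ snd s"
  unfolding path_cat_def by simp_all

lemma path_cat_assoc: "path_cat (path_cat p q) s = path_cat p (path_cat q s)"
  unfolding path_cat_def by simp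

lemma path_tail_trivial [simp]: "ptl (v, []) = v"
  unfolding path_tail_def by simp

lemma path_tail_cat: "ptl p = fst s \<Longrightarrow> ptl (path_cat p s) = ptl s"
  unfolding path_tail_def path_cat_def by auto

lemma path_cat_trivial_left: "path_cat (fst s, []) s = s"
  and path_cat_trivial_right: "path_cat p (v, []) = p"
  unfolding path_cat_def by simp_all

lemma path_cat_in_paths:
  assumes "p \<in> paths" "s \<in> paths" "ptl p = fst s"
  shows "path_cat p s \<in> paths"
  using assms unfolding mem_paths_iff path_tail_def by (auto simp: composable_append_iff split: if_splits)

lemma path_eqI:
  assumes "p \<in> paths" "p' \<in> paths" "snd p = snd p'" "ptl p = ptl p'"
  shows "p = p'"
  using assms unfolding mem_paths_iff path_tail_def by (cases "snd p = []") (auto simp: prod_eq_iff)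

lemma automorphism_path_sigma: "p \<in> paths \<Longrightarrow> ring_automorphism (\<sigma>\<^sub>P p)"
  using automorphisms unfolding mem_paths_iff composable_def
  by (intro ring_automorphism_path_sigma) auto

text \<open>\<open>right_factor q m\<close> means \<open>m = w q\<close> for some path \<open>w\<close>, and \<open>left_factor q m\<close> means
  \<open>m = q w\<close> (see \<open>right_factorE\<close>, \<open>left_factorE\<close>). Phrased by suffixes and prefixes, two right
  (left) factors of the same path are evidently comparable.\<close>

definition right_factor :: "'v \<times> 'e list \<Rightarrow> 'v \<times> 'e list \<Rightarrow> bool"
  where "right_factor q m \<longleftrightarrow> suffix (snd q) (snd m) \<and> ptl q = ptl m"

definition left_factor :: "'v \<times> 'e list \<Rightarrow> 'v \<times> 'e list \<Rightarrow> bool"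
  where "left_factor q m \<longleftrightarrow> prefix (snd q) (snd m) \<and> fst q = fst m"

lemma right_factorE:
  assumes "q \<in> paths" "m \<in> paths" "right_factor q m"
  obtains w where "w \<in> paths" "ptl w = fst q" "path_cat w q = m"
proof -
  obtain us where us: "snd m = us @ snd q" and tails: "ptl q = ptl m"
    using assms(3) unfolding right_factor_def suffix_def by blast
  define w where "w = (fst m, us)"
  have "w \<in> paths" "ptl w = fst q"
    using assms(1,2) us tails unfolding w_def mem_paths_iff path_tail_def
    by (auto simp: composable_append_iff split: if_splits)
  moreover have "path_cat w q = m"
    using us unfolding w_def path_cat_def by (simp add: prod_eq_iff)
  ultimately show ?thesis
    using that by blast
qed

lemma left_factorE:
  assumes "q \<in> paths" "m \<in> paths" "left_factor q m"
  obtains w where "w \<in> paths" "ptl q = fst w" "path_cat q w = m"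
proof -
  obtain us where us: "snd m = snd q @ us" and heads: "fst q = fst m"
    using assms(3) unfolding left_factor_def prefix_def by blast
  define w where "w = (ptl q, us)"
  have "w \<in> paths"
    using assms(1,2) us heads path_tail_in_Q0[OF assms(1)] unfolding w_def mem_paths_iff path_tail_def
    by (auto simp: composable_append_iff split: if_splits)
  moreover have "path_cat q w = m"
    using us heads unfolding w_def path_cat_def by (simp add: prod_eq_iff)
  ultimately show ?thesis
    using that unfolding w_def by simp
qed

lemma right_factor_length_less:
  assumes "q \<in> paths" "m \<in> paths" "right_factor q m" "q \<noteq> m"
  shows "length (snd q) < length (snd m)"
  using assms path_eqI suffix_length_less unfolding right_factor_def strict_suffix_def by blast

lemma left_factor_length_less:
  assumes "left_factor q m" "q \<noteq> m"
  shows "length (snd q) < length (snd m)"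
  using assms prefix_length_less unfolding left_factor_def strict_prefix_def by (auto simp: prod_eq_iff)

end

section \<open>The ring structure\<close>

context semilinear_path_alg
begin

lemma carrier_R_iff: "x \<in> carrier R \<longleftrightarrow> (\<forall>p. x p \<noteq> 0 \<longrightarrow> p \<in> paths)"
proof
  assume "\<forall>p. x p \<noteq> 0 \<longrightarrow> p \<in> paths"
  then have "{p. x p \<noteq> 0} \<subseteq> paths"
    by blast
  then show "x \<in> carrier R"
    using finite_paths \<open>\<forall>p. x p \<noteq> 0 \<longrightarrow> p \<in> paths\<close>
    unfolding semilinear_path_algebra_def path_alg_carrier_def paths_def
    by (auto intro: finite_subset)
qed (auto simp: semilinear_path_algebra_def path_alg_carrier_def paths_def)

lemma carrier_R_outside: "x \<in> carrier R \<Longrightarrow> p \<notin> paths \<Longrightarrow> x p = 0"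
  unfolding carrier_R_iff by blast

text \<open>\<open>diag c = \<Sum>\<^sub>v c v e\<^sub>v\<close>.\<close>

definition diag :: "('v \<Rightarrow> 'k) \<Rightarrow> 'v \<times> 'e list \<Rightarrow> 'k"
  where "diag c p = (if fst p \<in> Q0 \<and> snd p = [] then c (fst p) else 0)"

lemma R_simps [simp]:
  "one R = diag (\<lambda>v. 1)" "zero R = (\<lambda>p. 0)" "add R = (\<lambda>x y p. x p + y p)"
  "mult R = path_alg_mult tl_q \<sigma>"
  unfolding semilinear_path_algebra_def diag_def by (simp_all add: fun_eq_iff)

lemma path_alg_scalar_eq_diag: "path_alg_scalar Q0 c = diag (\<lambda>v. c)"
  unfolding path_alg_scalar_def diag_def by (simp add: fun_eq_iff)

lemma diag_in_carrier: "diag c \<in> carrier R"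
  unfolding carrier_R_iff diag_def by (auto simp: prod_eq_iff)

lemma add_in_carrier: "x \<in> carrier R \<Longrightarrow> y \<in> carrier R \<Longrightarrow> (\<lambda>p. x p + y p) \<in> carrier R"
  unfolding carrier_R_iff by (metis add.right_neutral)

lemma uminus_in_carrier: "x \<in> carrier R \<Longrightarrow> (\<lambda>p. - x p) \<in> carrier R"
  unfolding carrier_R_iff by simp

lemma diff_in_carrier: "x \<in> carrier R \<Longrightarrow> y \<in> carrier R \<Longrightarrow> (\<lambda>p. x p - y p) \<in> carrier R"
  unfolding carrier_R_iff by (metis diff_self)

lemma zero_in_carrier: "(\<lambda>p. 0) \<in> carrier R"
  unfolding carrier_R_iff by simp

text \<open>The product, summed over all pairs of paths instead of over the supports as in
  \<open>path_alg_mult\<close>; this is possible because there are only finitely many paths.\<close>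

definition conv :: "('v \<times> 'e list \<Rightarrow> 'k) \<Rightarrow> ('v \<times> 'e list \<Rightarrow> 'k) \<Rightarrow> 'v \<times> 'e list \<Rightarrow> 'k"
  where "conv x y r = (\<Sum>p\<in>paths. \<Sum>s\<in>paths.
    if ptl p = fst s \<and> path_cat p s = r then x p * \<sigma>\<^sub>P p (y s) else 0)"

lemma mult_eq_conv:
  assumes "x \<in> carrier R" "y \<in> carrier R"
  shows "path_alg_mult tl_q \<sigma> x y = conv x y"
proof
  fix r
  let ?S = "{(p, q). x p \<noteq> 0 \<and> y q \<noteq> 0 \<and> ptl p = path_head q \<and> path_cat p q = r}"
  let ?f = "\<lambda>(p, s). if ptl p = fst s \<and> path_cat p s = r then x p * \<sigma>\<^sub>P p (y s) else 0"
  have "conv x y r = (\<Sum>ps\<in>paths \<times> paths. ?f ps)"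
    unfolding conv_def by (rule sum.cartesian_product)
  also have "\<dots> = (\<Sum>(p, s)\<in>?S. x p * \<sigma>\<^sub>P p (y s))"
  proof (rule sum.mono_neutral_cong_right)
    show "?S \<subseteq> paths \<times> paths"
      using assms unfolding carrier_R_iff by blast
    show "\<forall>ps\<in>paths \<times> paths - ?S. ?f ps = 0"
    proof
      fix ps assume ps: "ps \<in> paths \<times> paths - ?S"
      obtain p s where [simp]: "ps = (p, s)"
        by (cases ps)
      have "\<sigma>\<^sub>P p 0 = 0"
        using ps ring_automorphism_zero[OF automorphism_path_sigma] by auto
      then show "?f ps = 0"
        using ps by (cases "y s = 0") (auto simp: path_head_def)
    qed
  qed (auto simp: finite_paths path_head_def)
  finally show "path_alg_mult tl_q \<sigma> x y r = conv x y r"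
    by (simp add: path_alg_mult_def path_head_def)
qed

lemma conv_support:
  assumes "conv x y r \<noteq> 0"
  shows "\<exists>p\<in>paths. \<exists>s\<in>paths. x p \<noteq> 0 \<and> y s \<noteq> 0 \<and> ptl p = fst s \<and> path_cat p s = r"
proof (rule ccontr)
  assume none: "\<not> ?thesis"
  have "(if ptl p = fst s \<and> path_cat p s = r then x p * \<sigma>\<^sub>P p (y s) else 0) = 0"
    if "p \<in> paths" "s \<in> paths" for p s
    using none that ring_automorphism_zero[OF automorphism_path_sigma[OF that(1)]]
    by (cases "y s = 0") auto
  then have "conv x y r = 0"
    unfolding conv_def by simp
  then show False
    using assms by simp
qed

lemma conv_in_carrier: "conv x y \<in> carrier R"
  using conv_support path_cat_in_paths unfolding carrier_R_iff by blast

lemma conv_add_left: "conv (\<lambda>p. x p + x' p) y = (\<lambda>r. conv x y r + conv x' y r)"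
  unfolding conv_def by (intro ext) (auto simp: sum.distrib[symmetric] distrib_right intro!: sum.cong)

lemma conv_diff_left: "conv (\<lambda>p. x p - x' p) y = (\<lambda>r. conv x y r - conv x' y r)"
  unfolding conv_def by (intro ext) (auto simp: sum_subtractf[symmetric] left_diff_distrib intro!: sum.cong)

lemma conv_zero_left: "conv (\<lambda>p. 0) y = (\<lambda>r. 0)"
  unfolding conv_def by (simp cong: if_cong)

lemma conv_add_right: "conv x (\<lambda>p. y p + y' p) = (\<lambda>r. conv x y r + conv x y' r)"
  unfolding conv_def
  by (intro ext) (auto simp: sum.distrib[symmetric] distrib_left ring_automorphism_def[THEN iffD1, OF automorphism_path_sigma]
      intro!: sum.cong)

lemma conv_diff_right: "conv x (\<lambda>p. y p - y' p) = (\<lambda>r. conv x y r - conv x y' r)"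
  unfolding conv_def
  by (intro ext) (auto simp: sum_subtractf[symmetric] right_diff_distrib ring_automorphism_diff[OF automorphism_path_sigma]
      intro!: sum.cong)

lemma conv_zero_right: "conv x (\<lambda>p. 0) = (\<lambda>r. 0)"
  unfolding conv_def by (intro ext sum.neutral ballI) (simp add: ring_automorphism_zero[OF automorphism_path_sigma])

lemma sum_paths_cat:
  assumes "p \<in> paths" "q \<in> paths"
  shows "(\<Sum>a\<in>paths. if ptl p = fst q \<and> path_cat p q = a then F a else 0) =
    (if ptl p = fst q then F (path_cat p q) else 0)"
  using assms path_cat_in_paths finite_paths by auto

lemma sum_paths_cat_swap:
  "(\<Sum>a\<in>paths. \<Sum>p\<in>paths. \<Sum>q\<in>paths. if ptl p = fst q \<and> path_cat p q = a then H a p q else 0) =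
   (\<Sum>p\<in>paths. \<Sum>q\<in>paths. if ptl p = fst q then H (path_cat p q) p q else 0)"
proof -
  have "(\<Sum>a\<in>paths. \<Sum>p\<in>paths. \<Sum>q\<in>paths. if ptl p = fst q \<and> path_cat p q = a then H a p q else 0) =
    (\<Sum>p\<in>paths. \<Sum>q\<in>paths. \<Sum>a\<in>paths. if ptl p = fst q \<and> path_cat p q = a then H a p q else 0)"
    by (subst sum.swap) (intro sum.cong refl sum.swap)
  also have "\<dots> = (\<Sum>p\<in>paths. \<Sum>q\<in>paths. if ptl p = fst q then H (path_cat p q) p q else 0)"
    by (intro sum.cong refl sum_paths_cat)
  finally show ?thesis .
qed

text \<open>Both bracketings of a triple product expand to this sum, because \<open>\<sigma>\<^sub>p\<^sub>q = \<sigma>\<^sub>p \<circ> \<sigma>\<^sub>q\<close> and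
  each \<open>\<sigma>\<^sub>p\<close> is a ring homomorphism.\<close>

definition triple_conv ::
  "('v \<times> 'e list \<Rightarrow> 'k) \<Rightarrow> ('v \<times> 'e list \<Rightarrow> 'k) \<Rightarrow> ('v \<times> 'e list \<Rightarrow> 'k) \<Rightarrow> 'v \<times> 'e list \<Rightarrow> 'k"
  where "triple_conv x y z r = (\<Sum>p\<in>paths. \<Sum>q\<in>paths. \<Sum>s\<in>paths. if ptl p = fst q then
    (if ptl q = fst s \<and> path_cat p (path_cat q s) = r then x p * \<sigma>\<^sub>P p (y q) * \<sigma>\<^sub>P p (\<sigma>\<^sub>P q (z s)) else 0) else 0)"

lemma conv_conv_left: "conv (conv x y) z = triple_conv x y z"
proof
  fix r
  define W where "W a = (\<Sum>s\<in>paths. if ptl a = fst s \<and> path_cat a s = r then \<sigma>\<^sub>P a (z s) else 0)" for a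
  have "conv (conv x y) z r = (\<Sum>a\<in>paths. conv x y a * W a)"
    unfolding conv_def[of "conv x y" z] W_def
    by (intro sum.cong refl) (simp add: sum_distrib_left if_zero_mult_right)
  also have "\<dots> = (\<Sum>a\<in>paths. \<Sum>p\<in>paths. \<Sum>q\<in>paths.
      if ptl p = fst q \<and> path_cat p q = a then x p * \<sigma>\<^sub>P p (y q) * W a else 0)"
    unfolding conv_def[of x y] by (intro sum.cong refl) (simp add: sum_distrib_right if_zero_mult_left)
  also have "\<dots> = (\<Sum>p\<in>paths. \<Sum>q\<in>paths. if ptl p = fst q then x p * \<sigma>\<^sub>P p (y q) * W (path_cat p q) else 0)"
    by (rule sum_paths_cat_swap)
  also have "\<dots> = triple_conv x y z r"
    unfolding triple_conv_def W_def
    by (intro sum.cong refl)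
      (auto simp: path_sigma_cat path_tail_cat path_cat_assoc sum_distrib_left if_zero_mult_right cong: if_cong)
  finally show "conv (conv x y) z r = triple_conv x y z r" .
qed

lemma path_sigma_conv:
  assumes "p \<in> paths"
  shows "\<sigma>\<^sub>P p (conv y z b) =
    (\<Sum>q\<in>paths. \<Sum>s\<in>paths. if ptl q = fst s \<and> path_cat q s = b then \<sigma>\<^sub>P p (y q) * \<sigma>\<^sub>P p (\<sigma>\<^sub>P q (z s)) else 0)"
proof -
  note aut = automorphism_path_sigma[OF assms]
  show ?thesis
    unfolding conv_def ring_automorphism_sum[OF aut]
    by (intro sum.cong refl) (simp add: ring_automorphism_zero[OF aut] ring_automorphism_def[THEN iffD1, OF aut])
qed

lemma conv_conv_right: "conv x (conv y z) = triple_conv x y z"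
proof
  fix r
  have "conv x (conv y z) r = (\<Sum>p\<in>paths. \<Sum>b\<in>paths. \<Sum>q\<in>paths. \<Sum>s\<in>paths.
      if ptl q = fst s \<and> path_cat q s = b then
        (if ptl p = fst b \<and> path_cat p b = r then x p * (\<sigma>\<^sub>P p (y q) * \<sigma>\<^sub>P p (\<sigma>\<^sub>P q (z s))) else 0) else 0)"
    unfolding conv_def[of x "conv y z"]
  proof (intro sum.cong refl)
    fix p b assume "p \<in> paths"
    show "(if ptl p = fst b \<and> path_cat p b = r then x p * \<sigma>\<^sub>P p (conv y z b) else 0) = (\<Sum>q\<in>paths. \<Sum>s\<in>paths.
      if ptl q = fst s \<and> path_cat q s = b then
        (if ptl p = fst b \<and> path_cat p b = r then x p * (\<sigma>\<^sub>P p (y q) * \<sigma>\<^sub>P p (\<sigma>\<^sub>P q (z s))) else 0) else 0)"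
    proof (cases "ptl p = fst b \<and> path_cat p b = r")
      case True
      then show ?thesis
        using path_sigma_conv[OF \<open>p \<in> paths\<close>]
        by (simp add: sum_distrib_left if_zero_mult_right cong: if_cong)
    next
      case False
      then have "(ptl p = fst b \<and> path_cat p b = r) = False"
        by simp
      then show ?thesis
        by (simp only: if_False if_cancel sum.neutral_const)
    qed
  qed
  also have "\<dots> = (\<Sum>p\<in>paths. \<Sum>q\<in>paths. \<Sum>s\<in>paths. if ptl q = fst s then
      (if ptl p = fst (path_cat q s) \<and> path_cat p (path_cat q s) = r
       then x p * (\<sigma>\<^sub>P p (y q) * \<sigma>\<^sub>P p (\<sigma>\<^sub>P q (z s))) else 0) else 0)"
    by (intro sum.cong refl sum_paths_cat_swap)
  also have "\<dots> = triple_conv x y z r"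
    unfolding triple_conv_def by (intro sum.cong refl) (auto simp: mult.assoc)
  finally show "conv x (conv y z) r = triple_conv x y z r" .
qed

lemma conv_assoc: "conv (conv x y) z = conv x (conv y z)"
  by (simp only: conv_conv_left conv_conv_right)

lemma conv_diag_left:
  assumes x: "x \<in> carrier R"
  shows "conv (diag c) x = (\<lambda>r. c (fst r) * x r)"
proof
  fix r
  have "conv (diag c) x r = (\<Sum>p\<in>paths. \<Sum>s\<in>paths. if p = (fst s, []) \<and> s = r then c (fst s) * x s else 0)"
    unfolding conv_def
  proof (intro sum.cong refl)
    fix p s assume "p \<in> paths" "s \<in> paths"
    then show "(if ptl p = fst s \<and> path_cat p s = r then diag c p * \<sigma>\<^sub>P p (x s) else 0) =
        (if p = (fst s, []) \<and> s = r then c (fst s) * x s else 0)"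
      by (cases p) (auto simp: diag_def path_head_in_Q0 path_sigma_trivial path_cat_trivial_left)
  qed
  also have "\<dots> = (\<Sum>s\<in>paths. \<Sum>p\<in>paths. if p = (fst s, []) \<and> s = r then c (fst s) * x s else 0)"
    by (rule sum.swap)
  also have "\<dots> = (\<Sum>s\<in>paths. if s = r then c (fst s) * x s else 0)"
  proof (intro sum.cong refl)
    fix s assume "s \<in> paths"
    then show "(\<Sum>p\<in>paths. if p = (fst s, []) \<and> s = r then c (fst s) * x s else 0) =
        (if s = r then c (fst s) * x s else 0)"
      using finite_paths path_head_in_Q0 by (cases "s = r") simp_all
  qed
  also have "\<dots> = c (fst r) * x r"
    using finite_paths carrier_R_outside[OF x] by (cases "r \<in> paths") simp_all
  finally show "conv (diag c) x r = c (fst r) * x r" .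
qed

lemma conv_diag_right:
  assumes x: "x \<in> carrier R"
  shows "conv x (diag c) = (\<lambda>r. x r * \<sigma>\<^sub>P r (c (ptl r)))"
proof
  fix r
  have "conv x (diag c) r = (\<Sum>p\<in>paths. \<Sum>s\<in>paths.
      if s = (ptl p, []) \<and> p = r then x p * \<sigma>\<^sub>P p (c (ptl p)) else 0)"
    unfolding conv_def
  proof (intro sum.cong refl)
    fix p s assume "p \<in> paths" "s \<in> paths"
    then show "(if ptl p = fst s \<and> path_cat p s = r then x p * \<sigma>\<^sub>P p (diag c s) else 0) =
        (if s = (ptl p, []) \<and> p = r then x p * \<sigma>\<^sub>P p (c (ptl p)) else 0)"
      using path_cat_trivial_right[of p] ring_automorphism_zero[OF automorphism_path_sigma]
      by (cases s) (auto simp: diag_def path_tail_in_Q0)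
  qed
  also have "\<dots> = (\<Sum>p\<in>paths. if p = r then x p * \<sigma>\<^sub>P p (c (ptl p)) else 0)"
  proof (intro sum.cong refl)
    fix p assume "p \<in> paths"
    then show "(\<Sum>s\<in>paths. if s = (ptl p, []) \<and> p = r then x p * \<sigma>\<^sub>P p (c (ptl p)) else 0) =
        (if p = r then x p * \<sigma>\<^sub>P p (c (ptl p)) else 0)"
      using finite_paths path_tail_in_Q0 by (cases "p = r") simp_all
  qed
  also have "\<dots> = x r * \<sigma>\<^sub>P r (c (ptl r))"
    using finite_paths carrier_R_outside[OF x] by (cases "r \<in> paths") simp_all
  finally show "conv x (diag c) r = x r * \<sigma>\<^sub>P r (c (ptl r))" .
qed

lemma ring_R: "ring R"
proof (rule ringI)
  show "abelian_group R"
    by (rule abelian_groupI)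
      (auto simp: add_in_carrier zero_in_carrier add.assoc add.commute intro!: bexI[OF _ uminus_in_carrier])
  have one_right: "conv x (diag (\<lambda>v. 1)) = x" if "x \<in> carrier R" for x
  proof
    fix r
    show "conv x (diag (\<lambda>v. 1)) r = x r"
      using that carrier_R_outside[OF that] ring_automorphism_def[THEN iffD1, OF automorphism_path_sigma]
      by (cases "r \<in> paths") (simp_all add: conv_diag_right)
  qed
  show "monoid R"
    by (rule monoidI)
      (auto simp: mult_eq_conv conv_in_carrier diag_in_carrier conv_assoc conv_diag_left one_right)
qed (simp_all add: mult_eq_conv add_in_carrier conv_add_left conv_add_right)

lemma ring_hom_ring_path_alg_scalar:
  "ring_hom_ring (\<lparr>carrier = UNIV, mult = (*), one = 1, zero = 0, add = (+)\<rparr> :: 'k ring) R (path_alg_scalar Q0)"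
proof (rule ring_hom_ringI)
  show "ring (\<lparr>carrier = UNIV, mult = (*), one = 1, zero = 0, add = (+)\<rparr> :: 'k ring)"
    by (rule ringI) (auto intro!: abelian_groupI monoidI simp: algebra_simps, metis add.right_inverse)
qed (auto simp: ring_R path_alg_scalar_eq_diag diag_in_carrier mult_eq_conv conv_diag_left diag_def fun_eq_iff)

lemma a_inv_R:
  assumes "x \<in> carrier R"
  shows "\<ominus>\<^bsub>R\<^esub> x = (\<lambda>p. - x p)"
proof -
  interpret ring R by (rule ring_R)
  show ?thesis
    using assms uminus_in_carrier by (intro minus_equality) auto
qed

lemma additive_subgroup_R_closed:
  assumes "additive_subgroup I R"
  shows "I \<subseteq> carrier R" "(\<lambda>p. 0) \<in> I"
    and "x \<in> I \<Longrightarrow> y \<in> I \<Longrightarrow> (\<lambda>p. x p + y p) \<in> I"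
    and "x \<in> I \<Longrightarrow> y \<in> I \<Longrightarrow> (\<lambda>p. x p - y p) \<in> I"
proof -
  interpret additive_subgroup I R by fact
  show sub: "I \<subseteq> carrier R" and "(\<lambda>p. 0) \<in> I"
    using a_subset zero_closed by simp_all
  show add: "(\<lambda>p. x p + y p) \<in> I" if "x \<in> I" "y \<in> I" for x y
    using a_closed[OF that] by simp
  show "(\<lambda>p. x p - y p) \<in> I" if "x \<in> I" "y \<in> I"
    using add[OF that(1) a_inv_closed[OF that(2)]] a_inv_R sub that by auto
qed

lemma finsum_R_eval:
  assumes "finite B" "F \<in> B \<rightarrow> carrier R"
  shows "finsum R F B = (\<lambda>p. \<Sum>i\<in>B. F i p)"
proof -
  interpret ring R by (rule ring_R)
  show ?thesis
    using assms by (induction B rule: finite_induct) auto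
qed

text \<open>\<open>ending_at v\<close> is the left ideal \<open>K\<^sub>\<sigma>Q e\<^sub>v\<close> and \<open>starting_at v\<close> the right ideal \<open>e\<^sub>v K\<^sub>\<sigma>Q\<close>.\<close>

definition ending_at :: "'v \<Rightarrow> ('v \<times> 'e list \<Rightarrow> 'k) set"
  where "ending_at v = {x \<in> carrier R. \<forall>p. ptl p \<noteq> v \<longrightarrow> x p = 0}"

definition starting_at :: "'v \<Rightarrow> ('v \<times> 'e list \<Rightarrow> 'k) set"
  where "starting_at v = {x \<in> carrier R. \<forall>p. fst p \<noteq> v \<longrightarrow> x p = 0}"

lemma ending_at_subset_carrier: "ending_at v \<subseteq> carrier R"
  and starting_at_subset_carrier: "starting_at v \<subseteq> carrier R"
  unfolding ending_at_def starting_at_def by blast+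

lemma ending_at_closed:
  "(\<lambda>p. 0) \<in> ending_at v"
  "a \<in> ending_at v \<Longrightarrow> b \<in> ending_at v \<Longrightarrow> (\<lambda>p. a p + b p) \<in> ending_at v"
  "a \<in> ending_at v \<Longrightarrow> b \<in> ending_at v \<Longrightarrow> (\<lambda>p. a p - b p) \<in> ending_at v"
  unfolding ending_at_def using zero_in_carrier add_in_carrier diff_in_carrier by auto

lemma starting_at_closed:
  "(\<lambda>p. 0) \<in> starting_at v"
  "a \<in> starting_at v \<Longrightarrow> b \<in> starting_at v \<Longrightarrow> (\<lambda>p. a p + b p) \<in> starting_at v"
  "a \<in> starting_at v \<Longrightarrow> b \<in> starting_at v \<Longrightarrow> (\<lambda>p. a p - b p) \<in> starting_at v"
  unfolding starting_at_def using zero_in_carrier add_in_carrier diff_in_carrier by auto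

lemma conv_ending_at:
  assumes "r \<in> ending_at v"
  shows "conv c r \<in> ending_at v"
proof -
  have "ptl p = v" if nonzero: "conv c r p \<noteq> 0" for p
  proof -
    obtain a s where "r s \<noteq> 0" "ptl a = fst s" "path_cat a s = p"
      using conv_support[OF nonzero] by blast
    moreover have "ptl s = v"
      using assms \<open>r s \<noteq> 0\<close> unfolding ending_at_def by blast
    ultimately show ?thesis
      using path_tail_cat by blast
  qed
  then show ?thesis
    using conv_in_carrier unfolding ending_at_def by blast
qed

lemma conv_starting_at:
  assumes "r \<in> starting_at v"
  shows "conv r c \<in> starting_at v"
proof -
  have "fst p = v" if nonzero: "conv r c p \<noteq> 0" for p
  proof -
    obtain a s where "r a \<noteq> 0" "path_cat a s = p"
      using conv_support[OF nonzero] by blast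
    moreover have "fst a = v"
      using assms \<open>r a \<noteq> 0\<close> unfolding starting_at_def by blast
    ultimately show ?thesis
      by auto
  qed
  then show ?thesis
    using conv_in_carrier unfolding starting_at_def by blast
qed

end

section \<open>Leading paths\<close>

context semilinear_path_alg
begin

definition arrow_index :: "'e \<Rightarrow> nat"
  where "arrow_index = (SOME f. inj_on f Q1)"

definition vertex_index :: "'v \<Rightarrow> nat"
  where "vertex_index = (SOME f. inj_on f Q0)"

text \<open>Arrows and vertices are numbered arbitrarily: all that matters is that the induced order is
  total on paths and compatible with concatenation.\<close>

definition path_key :: "'v \<times> 'e list \<Rightarrow> nat \<times> nat list \<times> nat"
  where "path_key p = (length (snd p), map arrow_index (snd p), vertex_index (fst p))"

lemma inj_on_arrow_index: "inj_on arrow_index Q1"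
proof -
  obtain f :: "'e \<Rightarrow> nat" and n where "f ` Q1 = {i. i < n} \<and> inj_on f Q1"
    using finite_imp_inj_to_nat_seg[OF finite_arrows] by blast
  then show ?thesis
    unfolding arrow_index_def by (intro someI[of "\<lambda>f. inj_on f Q1" f]) simp
qed

lemma inj_on_vertex_index: "inj_on vertex_index Q0"
proof -
  obtain f :: "'v \<Rightarrow> nat" and n where "f ` Q0 = {i. i < n} \<and> inj_on f Q0"
    using finite_imp_inj_to_nat_seg[OF finite_vertices] by blast
  then show ?thesis
    unfolding vertex_index_def by (intro someI[of "\<lambda>f. inj_on f Q0" f]) simp
qed

lemma inj_on_path_key: "inj_on path_key paths"
proof (rule inj_onI)
  fix p p' assume "p \<in> paths" "p' \<in> paths" and eq: "path_key p = path_key p'"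
  then have arrows: "set (snd p) \<union> set (snd p') \<subseteq> Q1" and "fst p \<in> Q0" "fst p' \<in> Q0"
    unfolding mem_paths_iff composable_def by auto
  have "map arrow_index (snd p) = map arrow_index (snd p')" "vertex_index (fst p) = vertex_index (fst p')"
    using eq unfolding path_key_def by simp_all
  then have "snd p = snd p'" "fst p = fst p'"
    using inj_on_map_eq_map[OF inj_on_subset[OF inj_on_arrow_index arrows]]
      inj_onD[OF inj_on_vertex_index _ \<open>fst p \<in> Q0\<close> \<open>fst p' \<in> Q0\<close>]
    by simp_all
  then show "p = p'"
    by (simp add: prod_eq_iff)
qed

lemma path_key_le_length: "path_key p \<le> path_key p' \<Longrightarrow> length (snd p) \<le> length (snd p')"
  unfolding path_key_def by auto

lemma path_key_cat_mono:
  assumes "path_key a \<le> path_key a'" "path_key b \<le> path_key b'"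
  shows "path_key (path_cat a b) \<le> path_key (path_cat a' b')"
proof (cases "length (snd a) + length (snd b) < length (snd a') + length (snd b')")
  case True
  then show ?thesis
    unfolding path_key_def by simp
next
  case False
  define xs xs' ys ys' where "xs = map arrow_index (snd a)" "xs' = map arrow_index (snd a')"
    "ys = map arrow_index (snd b)" "ys' = map arrow_index (snd b')"
  have "length (snd a) \<le> length (snd a')" "length (snd b) \<le> length (snd b')"
    using assms path_key_le_length by blast+
  then have len: "length (snd a) = length (snd a')" "length (snd b) = length (snd b')"
    using False by linarith+
  then have "xs \<le> xs'" "ys \<le> ys'"
    using assms unfolding path_key_def xs_xs'_ys_ys'_def by auto
  then have "xs @ ys \<le> xs' @ ys'"
    using len unfolding xs_xs'_ys_ys'_def by (intro append_mono_same_length) auto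
  show ?thesis
  proof (cases "xs @ ys = xs' @ ys'")
    case True
    then have "xs = xs'"
      using len unfolding xs_xs'_ys_ys'_def by simp
    then have "vertex_index (fst a) \<le> vertex_index (fst a')"
      using assms(1) len unfolding path_key_def xs_xs'_ys_ys'_def by simp
    then show ?thesis
      using True len unfolding path_key_def xs_xs'_ys_ys'_def by simp
  next
    case False
    then have "xs @ ys < xs' @ ys'"
      using \<open>xs @ ys \<le> xs' @ ys'\<close> by simp
    then show ?thesis
      using len unfolding path_key_def xs_xs'_ys_ys'_def by simp
  qed
qed

lemma path_key_cat_less:
  assumes "path_key a \<le> path_key a'" "path_key b \<le> path_key b'" "fst b = fst b'"
    and "path_cat a b \<in> paths" "path_cat a' b' \<in> paths" "(a, b) \<noteq> (a', b')"
  shows "path_key (path_cat a b) < path_key (path_cat a' b')"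
proof -
  have "path_cat a b \<noteq> path_cat a' b'"
  proof
    assume eq: "path_cat a b = path_cat a' b'"
    have "length (snd a) \<le> length (snd a')" "length (snd b) \<le> length (snd b')"
      using path_key_le_length assms(1,2) by blast+
    moreover have "length (snd a) + length (snd b) = length (snd a') + length (snd b')"
      using arg_cong[OF eq, of "\<lambda>p. length (snd p)"] by simp
    ultimately have "length (snd a) = length (snd a')"
      by linarith
    then have "snd a = snd a'" "snd b = snd b'" "fst a = fst a'"
      using arg_cong[OF eq, of snd] arg_cong[OF eq, of fst] by auto
    then show False
      using assms(3,6) by (simp add: prod_eq_iff)
  qed
  then have "path_key (path_cat a b) \<noteq> path_key (path_cat a' b')"
    using inj_on_eq_iff[OF inj_on_path_key assms(4,5)] by simp
  then show ?thesis
    using path_key_cat_mono[OF assms(1,2)] by simp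
qed

definition lead_path :: "('v \<times> 'e list \<Rightarrow> 'k) \<Rightarrow> 'v \<times> 'e list"
  where "lead_path x = (ARG_MAX path_key p. x p \<noteq> 0)"

lemma lead_path:
  assumes x: "x \<in> carrier R" and nonzero: "x \<noteq> (\<lambda>p. 0)"
  shows "x (lead_path x) \<noteq> 0" and "\<And>p. x p \<noteq> 0 \<Longrightarrow> path_key p \<le> path_key (lead_path x)"
    and "lead_path x \<in> paths"
proof -
  define S where "S = {p. x p \<noteq> 0}"
  have "S \<subseteq> paths" "S \<noteq> {}"
    using x nonzero unfolding S_def carrier_R_iff by auto
  then have "finite S"
    using finite_paths finite_subset by blast
  then have "Max (path_key ` S) \<in> path_key ` S"
    using \<open>S \<noteq> {}\<close> by simp
  then obtain k where "k \<in> S" "path_key k = Max (path_key ` S)"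
    by auto
  then have max: "x k \<noteq> 0" "\<And>p. x p \<noteq> 0 \<Longrightarrow> path_key p \<le> path_key k"
    using \<open>finite S\<close> unfolding S_def by auto
  have "x (lead_path x) \<noteq> 0 \<and> (\<forall>p. x p \<noteq> 0 \<longrightarrow> path_key p \<le> path_key (lead_path x))"
    unfolding lead_path_def
    by (rule arg_maxI[where P = "\<lambda>p. x p \<noteq> 0" and f = path_key and x = k and
          Q = "\<lambda>m. x m \<noteq> 0 \<and> (\<forall>p. x p \<noteq> 0 \<longrightarrow> path_key p \<le> path_key m)"])
      (use max in \<open>auto simp: not_less\<close>)
  then show "x (lead_path x) \<noteq> 0" "\<And>p. x p \<noteq> 0 \<Longrightarrow> path_key p \<le> path_key (lead_path x)"
    by auto
  then show "lead_path x \<in> paths"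
    using x unfolding carrier_R_iff by blast
qed

lemma lead_path_eqI:
  assumes "x \<in> carrier R" "x p \<noteq> 0" "\<And>p'. x p' \<noteq> 0 \<Longrightarrow> path_key p' \<le> path_key p"
  shows "lead_path x = p"
proof -
  have "x \<noteq> (\<lambda>p. 0)"
    using assms(2) by auto
  then have "path_key (lead_path x) = path_key p"
    using assms lead_path[of x] by (meson order_antisym)
  then show ?thesis
    using assms lead_path[of x] inj_on_path_key carrier_R_iff \<open>x \<noteq> (\<lambda>p. 0)\<close>
    by (metis inj_on_eq_iff)
qed

definition monomial :: "'k \<Rightarrow> 'v \<times> 'e list \<Rightarrow> 'v \<times> 'e list \<Rightarrow> 'k"
  where "monomial c w = (\<lambda>p. if p = w then c else 0)"

lemma monomial_in_carrier: "w \<in> paths \<Longrightarrow> monomial c w \<in> carrier R"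
  unfolding monomial_def carrier_R_iff by auto

lemma lead_path_monomial: "w \<in> paths \<Longrightarrow> c \<noteq> 0 \<Longrightarrow> lead_path (monomial c w) = w"
  by (rule lead_path_eqI[OF monomial_in_carrier]) (auto simp: monomial_def split: if_splits)

lemma path_key_conv_le:
  assumes "r \<in> carrier R" "r \<noteq> (\<lambda>p. 0)" "u \<in> carrier R" "u \<noteq> (\<lambda>p. 0)" and "conv r u p \<noteq> 0"
  shows "path_key p \<le> path_key (path_cat (lead_path r) (lead_path u))"
proof -
  obtain a s where "r a \<noteq> 0" "u s \<noteq> 0" "path_cat a s = p"
    using conv_support[OF assms(5)] by blast
  then show ?thesis
    using path_key_cat_mono[OF lead_path(2)[OF assms(1,2)] lead_path(2)[OF assms(3,4)]] by blast
qed

lemma conv_at_lead_paths: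
  assumes r: "r \<in> ending_at v" "r \<noteq> (\<lambda>p. 0)" and u: "u \<in> starting_at v" "u \<noteq> (\<lambda>p. 0)"
  shows "path_cat (lead_path r) (lead_path u) \<in> paths"
    and "conv r u (path_cat (lead_path r) (lead_path u)) = r (lead_path r) * \<sigma>\<^sub>P (lead_path r) (u (lead_path u))"
proof -
  define m where "m = path_cat (lead_path r) (lead_path u)"
  have r_carrier: "r \<in> carrier R" and r_end: "\<And>p. r p \<noteq> 0 \<Longrightarrow> ptl p = v"
    and u_carrier: "u \<in> carrier R" and u_start: "\<And>s. u s \<noteq> 0 \<Longrightarrow> fst s = v"
    using r u unfolding ending_at_def starting_at_def by blast+
  note lr = lead_path[OF r_carrier r(2)] and lu = lead_path[OF u_carrier u(2)]
  have junction: "ptl (lead_path r) = fst (lead_path u)"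
    using r_end u_start lr(1) lu(1) by simp
  show m_paths: "path_cat (lead_path r) (lead_path u) \<in> paths"
    using path_cat_in_paths lr(3) lu(3) junction by blast
  have other_terms: "path_cat p s \<noteq> m"
    if "p \<in> paths" "s \<in> paths" "r p \<noteq> 0" "u s \<noteq> 0" "ptl p = fst s" "(p, s) \<noteq> (lead_path r, lead_path u)" for p s
    using path_key_cat_less[OF lr(2)[OF that(3)] lu(2)[OF that(4)] _ path_cat_in_paths[OF that(1,2,5)]
        m_paths that(6)] u_start[OF that(4)] u_start[OF lu(1)]
    unfolding m_def by auto
  have "conv r u m = (\<Sum>p\<in>paths. \<Sum>s\<in>paths.
      if p = lead_path r \<and> s = lead_path u then r (lead_path r) * \<sigma>\<^sub>P (lead_path r) (u (lead_path u)) else 0)"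
    unfolding conv_def
  proof (intro sum.cong refl)
    fix p s assume "p \<in> paths" "s \<in> paths"
    show "(if ptl p = fst s \<and> path_cat p s = m then r p * \<sigma>\<^sub>P p (u s) else 0) =
        (if p = lead_path r \<and> s = lead_path u then r (lead_path r) * \<sigma>\<^sub>P (lead_path r) (u (lead_path u)) else 0)"
    proof (cases "p = lead_path r \<and> s = lead_path u")
      case True
      then show ?thesis
        using junction unfolding m_def by simp
    next
      case False
      have "\<sigma>\<^sub>P p 0 = 0"
        using ring_automorphism_zero[OF automorphism_path_sigma[OF \<open>p \<in> paths\<close>]] .
      then show ?thesis
        using False other_terms[OF \<open>p \<in> paths\<close> \<open>s \<in> paths\<close>] by (cases "u s = 0") auto
    qed
  qed
  also have "\<dots> = r (lead_path r) * \<sigma>\<^sub>P (lead_path r) (u (lead_path u))"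
    by (rule sum_sum_delta[OF finite_paths finite_paths lr(3) lu(3)])
  finally show "conv r u (path_cat (lead_path r) (lead_path u)) = r (lead_path r) * \<sigma>\<^sub>P (lead_path r) (u (lead_path u))"
    unfolding m_def .
qed

lemma conv_lead_path:
  assumes r: "r \<in> ending_at v" "r \<noteq> (\<lambda>p. 0)" and u: "u \<in> starting_at v" "u \<noteq> (\<lambda>p. 0)"
  defines "m \<equiv> path_cat (lead_path r) (lead_path u)"
  shows "m \<in> paths"
    and "conv r u m = r (lead_path r) * \<sigma>\<^sub>P (lead_path r) (u (lead_path u))"
    and "conv r u m \<noteq> 0"
    and "\<And>p. conv r u p \<noteq> 0 \<Longrightarrow> path_key p \<le> path_key m"
proof -
  have "r \<in> carrier R" "u \<in> carrier R"
    using r u ending_at_subset_carrier starting_at_subset_carrier by blast+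
  note lr = lead_path[OF this(1) r(2)] and lu = lead_path[OF this(2) u(2)]
  show "m \<in> paths" "conv r u m = r (lead_path r) * \<sigma>\<^sub>P (lead_path r) (u (lead_path u))"
    unfolding m_def using conv_at_lead_paths[OF assms(1-4)] by simp_all
  then show "conv r u m \<noteq> 0"
    using lr(1) lu(1) ring_automorphism_eq_zero_iff[OF automorphism_path_sigma[OF lr(3)]] by simp
  show "path_key p \<le> path_key m" if "conv r u p \<noteq> 0" for p
    unfolding m_def using path_key_conv_le \<open>r \<in> carrier R\<close> \<open>u \<in> carrier R\<close> r(2) u(2) that by blast
qed

lemma monomial_ending_at: "w \<in> paths \<Longrightarrow> ptl w = v \<Longrightarrow> monomial c w \<in> ending_at v"
  and monomial_starting_at: "w \<in> paths \<Longrightarrow> fst w = v \<Longrightarrow> monomial c w \<in> starting_at v"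
  unfolding ending_at_def starting_at_def using monomial_in_carrier by (auto simp: monomial_def)


definition lead_paths :: "('v \<times> 'e list \<Rightarrow> 'k) set \<Rightarrow> ('v \<times> 'e list) set"
  where "lead_paths I = {lead_path x | x. x \<in> I \<and> x \<noteq> (\<lambda>p. 0)}"

lemma lead_paths_subset: "I \<subseteq> carrier R \<Longrightarrow> lead_paths I \<subseteq> paths"
  unfolding lead_paths_def using lead_path(3) by blast

text \<open>The number of paths below the leading path is the termination measure for cancelling
  leading terms.\<close>

lemma card_paths_below_cancel_lead_path:
  assumes x: "x \<in> carrier R" "x \<noteq> (\<lambda>p. 0)" and y: "y = (\<lambda>p. x p - t p)" "y \<in> carrier R" "y \<noteq> (\<lambda>p. 0)"
    and t: "t (lead_path x) = x (lead_path x)" "\<And>p. t p \<noteq> 0 \<Longrightarrow> path_key p \<le> path_key (lead_path x)"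
  shows "card {p \<in> paths. path_key p \<le> path_key (lead_path y)} < card {p \<in> paths. path_key p \<le> path_key (lead_path x)}"
proof (rule psubset_card_mono)
  note lead_x = lead_path[OF x]
  have "path_key p < path_key (lead_path x)" if "y p \<noteq> 0" for p
  proof -
    have "path_key p \<le> path_key (lead_path x)"
      using that lead_x(2) t(2) unfolding y(1) by (cases "x p = 0") auto
    moreover have "p \<in> paths"
      using that y(2) carrier_R_iff by blast
    moreover have "p \<noteq> lead_path x"
      using that t(1) unfolding y(1) by auto
    ultimately show ?thesis
      using inj_on_path_key lead_x(3) by (metis inj_on_eq_iff order_le_less)
  qed
  then have "path_key (lead_path y) < path_key (lead_path x)"
    using lead_path(1)[OF y(2,3)] by blast
  then have "{p \<in> paths. path_key p \<le> path_key (lead_path y)} \<subseteq> {p \<in> paths. path_key p \<le> path_key (lead_path x)}"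
    "lead_path x \<notin> {p \<in> paths. path_key p \<le> path_key (lead_path y)}"
    "lead_path x \<in> {p \<in> paths. path_key p \<le> path_key (lead_path x)}"
    using lead_x(3) by auto
  then show "{p \<in> paths. path_key p \<le> path_key (lead_path y)} \<subset> {p \<in> paths. path_key p \<le> path_key (lead_path x)}"
    by blast
qed (simp add: finite_paths)

text \<open>The largest of the leading paths occurs in only one summand.\<close>

lemma sum_distinct_lead_paths_nonzero:
  fixes G :: "'i \<Rightarrow> 'v \<times> 'e list \<Rightarrow> 'k"
  assumes "finite N" "N \<noteq> {}" and inj: "inj_on lead_of N"
    and leading: "\<And>j. j \<in> N \<Longrightarrow>
      lead_of j \<in> paths \<and> G j (lead_of j) \<noteq> 0 \<and> (\<forall>p. G j p \<noteq> 0 \<longrightarrow> path_key p \<le> path_key (lead_of j))"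
  shows "\<exists>p. (\<Sum>j\<in>N. G j p) \<noteq> 0"
proof -
  have "Max ((\<lambda>j. path_key (lead_of j)) ` N) \<in> (\<lambda>j. path_key (lead_of j)) ` N"
    using assms(1,2) by simp
  then obtain i where i: "i \<in> N" "path_key (lead_of i) = Max ((\<lambda>j. path_key (lead_of j)) ` N)"
    by auto
  then have i_max: "path_key (lead_of j) \<le> path_key (lead_of i)" if "j \<in> N" for j
    using assms(1) that by simp
  have others: "G j (lead_of i) = 0" if "j \<in> N - {i}" for j
  proof (rule ccontr)
    assume "G j (lead_of i) \<noteq> 0"
    then have "path_key (lead_of i) \<le> path_key (lead_of j)"
      using leading that by blast
    then have "path_key (lead_of i) = path_key (lead_of j)"
      using i_max that by (simp add: order_antisym)
    then have "lead_of i = lead_of j"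
      using inj_on_eq_iff[OF inj_on_path_key] leading i(1) that by blast
    then show False
      using inj i(1) that unfolding inj_on_def by blast
  qed
  have "(\<Sum>j\<in>N. G j (lead_of i)) = G i (lead_of i) + (\<Sum>j\<in>N - {i}. G j (lead_of i))"
    by (rule sum.remove[OF \<open>finite N\<close> i(1)])
  also have "\<dots> = G i (lead_of i)"
    using others by simp
  finally have "(\<Sum>j\<in>N. G j (lead_of i)) \<noteq> 0"
    using leading[OF i(1)] by simp
  then show ?thesis ..
qed

lemma triangular_decomposition_exists:
  assumes "finite B" and I_carrier: "I \<subseteq> carrier R"
    and I_diff: "\<And>x y. x \<in> I \<Longrightarrow> y \<in> I \<Longrightarrow> (\<lambda>p. x p - y p) \<in> I"
    and A_zero: "\<And>i. i \<in> B \<Longrightarrow> (\<lambda>p. 0) \<in> A i"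
    and A_add: "\<And>i a b. i \<in> B \<Longrightarrow> a \<in> A i \<Longrightarrow> b \<in> A i \<Longrightarrow> (\<lambda>p. a p + b p) \<in> A i"
    and F_zero: "\<And>i. i \<in> B \<Longrightarrow> F i (\<lambda>p. 0) = (\<lambda>p. 0)"
    and F_add: "\<And>i a b. i \<in> B \<Longrightarrow> a \<in> A i \<Longrightarrow> b \<in> A i \<Longrightarrow> F i (\<lambda>p. a p + b p) = (\<lambda>p. F i a p + F i b p)"
    and F_I: "\<And>i a. i \<in> B \<Longrightarrow> a \<in> A i \<Longrightarrow> F i a \<in> I"
    and reduce: "\<And>x. x \<in> I \<Longrightarrow> x \<noteq> (\<lambda>p. 0) \<Longrightarrow> \<exists>i\<in>B. \<exists>c\<in>A i.
      F i c (lead_path x) = x (lead_path x) \<and> (\<forall>p. F i c p \<noteq> 0 \<longrightarrow> path_key p \<le> path_key (lead_path x))"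
    and "x \<in> I"
  shows "\<exists>r. (\<forall>i\<in>B. r i \<in> A i) \<and> x = (\<lambda>p. \<Sum>i\<in>B. F i (r i) p)"
  using \<open>x \<in> I\<close>
proof (induction "card {p \<in> paths. path_key p \<le> path_key (lead_path x)}" arbitrary: x rule: less_induct)
  case less
  have zero: "\<exists>r. (\<forall>i\<in>B. r i \<in> A i) \<and> (\<lambda>p. 0) = (\<lambda>p. \<Sum>i\<in>B. F i (r i) p)"
    using A_zero F_zero by (intro exI[of _ "\<lambda>i p. 0"]) simp
  show ?case
  proof (cases "x = (\<lambda>p. 0)")
    case True
    then show ?thesis
      using zero by simp
  next
    case False
    have x_carrier: "x \<in> carrier R"
      using less.prems I_carrier by blast
    obtain i c where i: "i \<in> B" "c \<in> A i" and c: "F i c (lead_path x) = x (lead_path x)"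
      "\<And>p. F i c p \<noteq> 0 \<Longrightarrow> path_key p \<le> path_key (lead_path x)"
      using reduce[OF less.prems False] by blast
    define y where "y = (\<lambda>p. x p - F i c p)"
    have y_I: "y \<in> I"
      unfolding y_def using I_diff less.prems F_I i by blast
    obtain r where r: "\<forall>i\<in>B. r i \<in> A i" "y = (\<lambda>p. \<Sum>i\<in>B. F i (r i) p)"
    proof (cases "y = (\<lambda>p. 0)")
      case True
      then show ?thesis
        using zero that by metis
    next
      case False
      then show ?thesis
        using less.hyps[OF _ y_I] that y_I I_carrier
          card_paths_below_cancel_lead_path[OF x_carrier \<open>x \<noteq> (\<lambda>p. 0)\<close> y_def _ False c]
        by blast
    qed
    have "x = (\<lambda>p. \<Sum>j\<in>B. F j ((r(i := \<lambda>p. r i p + c p)) j) p)"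
    proof
      fix p
      have "(\<Sum>j\<in>B. F j ((r(i := \<lambda>p. r i p + c p)) j) p) = (\<Sum>j\<in>B. F j (r j) p + (if j = i then F i c p else 0))"
        using r(1) i F_add by (intro sum.cong) auto
      also have "\<dots> = (\<Sum>j\<in>B. F j (r j) p) + F i c p"
        using i \<open>finite B\<close> by (simp add: sum.distrib)
      also have "\<dots> = x p"
        using fun_cong[OF r(2), of p, symmetric] unfolding y_def by simp
      finally show "x p = (\<Sum>j\<in>B. F j ((r(i := \<lambda>p. r i p + c p)) j) p)" ..
    qed
    moreover have "\<forall>j\<in>B. (r(i := \<lambda>p. r i p + c p)) j \<in> A j"
      using r(1) i A_add by simp
    ultimately show ?thesis
      by blast
  qed
qed

lemma triangular_decomposition_unique:
  fixes F :: "'i \<Rightarrow> ('v \<times> 'e list \<Rightarrow> 'k) \<Rightarrow> 'v \<times> 'e list \<Rightarrow> 'k"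
  assumes "finite B"
    and A_diff: "\<And>i a b. i \<in> B \<Longrightarrow> a \<in> A i \<Longrightarrow> b \<in> A i \<Longrightarrow> (\<lambda>p. a p - b p) \<in> A i"
    and F_diff: "\<And>i a b. i \<in> B \<Longrightarrow> a \<in> A i \<Longrightarrow> b \<in> A i \<Longrightarrow> F i (\<lambda>p. a p - b p) = (\<lambda>p. F i a p - F i b p)"
    and leading: "\<And>i a. i \<in> B \<Longrightarrow> a \<in> A i \<Longrightarrow> a \<noteq> (\<lambda>p. 0) \<Longrightarrow>
      lead_of i a \<in> paths \<and> F i a (lead_of i a) \<noteq> 0 \<and> (\<forall>p. F i a p \<noteq> 0 \<longrightarrow> path_key p \<le> path_key (lead_of i a))"
    and distinct: "\<And>i j a b. i \<in> B \<Longrightarrow> j \<in> B \<Longrightarrow> a \<in> A i \<Longrightarrow> b \<in> A j \<Longrightarrow>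
      a \<noteq> (\<lambda>p. 0) \<Longrightarrow> b \<noteq> (\<lambda>p. 0) \<Longrightarrow> lead_of i a = lead_of j b \<Longrightarrow> i = j"
    and r: "\<forall>i\<in>B. r i \<in> A i" "\<forall>i\<in>B. r' i \<in> A i"
    and eq: "(\<lambda>p. \<Sum>i\<in>B. F i (r i) p) = (\<lambda>p. \<Sum>i\<in>B. F i (r' i) p)"
  shows "\<forall>i\<in>B. r i = r' i"
proof (rule ccontr)
  define \<delta> where "\<delta> i = (\<lambda>p. r i p - r' i p)" for i
  have \<delta>_A: "\<And>i. i \<in> B \<Longrightarrow> \<delta> i \<in> A i"
    unfolding \<delta>_def using r A_diff by blast
  have sum_zero: "(\<Sum>i\<in>B. F i (\<delta> i) p) = 0" for p
  proof -
    have "(\<Sum>i\<in>B. F i (\<delta> i) p) = (\<Sum>i\<in>B. F i (r i) p - F i (r' i) p)"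
      using r F_diff unfolding \<delta>_def by (intro sum.cong) auto
    also have "\<dots> = (\<Sum>i\<in>B. F i (r i) p) - (\<Sum>i\<in>B. F i (r' i) p)"
      by (rule sum_subtractf)
    finally show ?thesis
      using fun_cong[OF eq, of p] by simp
  qed
  define N where "N = {i \<in> B. \<delta> i \<noteq> (\<lambda>p. 0)}"
  assume "\<not> (\<forall>i\<in>B. r i = r' i)"
  then have "N \<noteq> {}"
    unfolding N_def \<delta>_def by (auto simp: fun_eq_iff)
  moreover have "finite N"
    using \<open>finite B\<close> unfolding N_def by simp
  moreover have "inj_on (\<lambda>j. lead_of j (\<delta> j)) N"
    using distinct \<delta>_A unfolding N_def inj_on_def by blast
  ultimately obtain p where "(\<Sum>j\<in>N. F j (\<delta> j) p) \<noteq> 0"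
    using sum_distinct_lead_paths_nonzero[of N "\<lambda>j. lead_of j (\<delta> j)" "\<lambda>j. F j (\<delta> j)"] leading \<delta>_A
    unfolding N_def by blast
  moreover have "F i (\<delta> i) = (\<lambda>p. 0)" if "i \<in> B - N" for i
    using F_diff[of i "\<delta> i" "\<delta> i"] \<delta>_A that unfolding N_def by simp
  then have "(\<Sum>j\<in>N. F j (\<delta> j) p) = (\<Sum>j\<in>B. F j (\<delta> j) p)"
    using \<open>finite B\<close> by (intro sum.mono_neutral_left) (auto simp: N_def)
  ultimately show False
    using sum_zero by simp
qed

end

section \<open>Left ideals\<close>

locale semilinear_path_alg_left_ideal = semilinear_path_alg Q0 Q1 hd_q tl_q \<sigma>
  for Q0 :: "'v set" and Q1 :: "'e set" and hd_q tl_q :: "'e \<Rightarrow> 'v" and \<sigma> :: "'e \<Rightarrow> 'k::division_ring \<Rightarrow> 'k" +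
  fixes I :: "('v \<times> 'e list \<Rightarrow> 'k) set"
  assumes left_ideal: "left_ideal I R"
begin

lemmas I_closed = additive_subgroup_R_closed[OF left_ideal[unfolded left_ideal_def, THEN conjunct1]]

lemma conv_left_closed: "c \<in> carrier R \<Longrightarrow> x \<in> I \<Longrightarrow> conv c x \<in> I"
  using left_ideal I_closed(1) mult_eq_conv unfolding left_ideal_def by fastforce

definition basis_paths :: "('v \<times> 'e list) set"
  where "basis_paths = minimal_wrt right_factor (lead_paths I)"

definition generator :: "'v \<times> 'e list \<Rightarrow> 'v \<times> 'e list \<Rightarrow> 'k"
  where "generator q = (SOME u. u \<in> I \<and> u \<in> starting_at (fst q) \<and> u \<noteq> (\<lambda>p. 0) \<and> lead_path u = q)"

lemma finite_basis_paths: "finite basis_paths"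
  using finite_paths lead_paths_subset[OF I_closed(1)] unfolding basis_paths_def minimal_wrt_def
  by (auto intro: finite_subset)

lemma generator:
  assumes "q \<in> lead_paths I"
  shows "generator q \<in> I" "generator q \<in> starting_at (fst q)" "generator q \<noteq> (\<lambda>p. 0)"
    "lead_path (generator q) = q"
proof -
  obtain x where x: "x \<in> I" "x \<noteq> (\<lambda>p. 0)" "lead_path x = q"
    using assms unfolding lead_paths_def by blast
  have x_carrier: "x \<in> carrier R"
    using x I_closed(1) by blast
  note lead_x = lead_path[OF x_carrier x(2), unfolded x(3)]
  define u where "u = conv (diag (\<lambda>v. if v = fst q then 1 else 0)) x"
  have u_eq: "u = (\<lambda>r. if fst r = fst q then x r else 0)"
    unfolding u_def conv_diag_left[OF x_carrier] by auto
  have "u \<in> I"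
    unfolding u_def using conv_left_closed diag_in_carrier x(1) by blast
  moreover have "u \<in> starting_at (fst q)"
    using \<open>u \<in> I\<close> I_closed(1) unfolding starting_at_def by (auto simp: u_eq)
  moreover have "u q \<noteq> 0"
    using lead_x(1) u_eq by simp
  moreover have "lead_path u = q"
    using \<open>u q \<noteq> 0\<close> \<open>u \<in> I\<close> I_closed(1) lead_x(2) unfolding u_eq
    by (intro lead_path_eqI) (auto split: if_splits)
  ultimately have "\<exists>u. u \<in> I \<and> u \<in> starting_at (fst q) \<and> u \<noteq> (\<lambda>p. 0) \<and> lead_path u = q"
    by blast
  then have "generator q \<in> I \<and> generator q \<in> starting_at (fst q) \<and> generator q \<noteq> (\<lambda>p. 0) \<and>
      lead_path (generator q) = q"
    unfolding generator_def by (rule someI_ex)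
  then show "generator q \<in> I" "generator q \<in> starting_at (fst q)" "generator q \<noteq> (\<lambda>p. 0)"
    "lead_path (generator q) = q"
    by auto
qed

lemma basis_generator:
  assumes "q \<in> basis_paths"
  shows "generator q \<in> I" "generator q \<in> starting_at (fst q)" "generator q \<noteq> (\<lambda>p. 0)"
    "lead_path (generator q) = q"
  using generator assms unfolding basis_paths_def minimal_wrt_def by blast+

lemma basis_paths_below:
  assumes "m \<in> lead_paths I"
  obtains q where "q \<in> basis_paths" "right_factor q m"
proof -
  have "\<exists>q\<in>basis_paths. right_factor q m"
    unfolding basis_paths_def
  proof (rule exists_minimal_wrt_below[of _ _ "\<lambda>q. length (snd q)"])
    show "right_factor a a" for a
      unfolding right_factor_def by simp
    show "right_factor a c" if "right_factor a b" "right_factor b c" for a b c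
      using that suffix_order.trans unfolding right_factor_def by auto
    show "length (snd a) < length (snd b)" if "a \<in> lead_paths I" "b \<in> lead_paths I" "right_factor a b" "a \<noteq> b" for a b
      using that right_factor_length_less lead_paths_subset[OF I_closed(1)] by blast
  qed (rule assms)
  then show ?thesis
    using that by blast
qed

lemma cancel_lead_path:
  assumes "x \<in> I" "x \<noteq> (\<lambda>p. 0)"
  shows "\<exists>q\<in>basis_paths. \<exists>c\<in>ending_at (fst q). conv c (generator q) (lead_path x) = x (lead_path x) \<and>
    (\<forall>p. conv c (generator q) p \<noteq> 0 \<longrightarrow> path_key p \<le> path_key (lead_path x))"
proof -
  define m where "m = lead_path x"
  have x_carrier: "x \<in> carrier R"
    using assms I_closed(1) by blast
  have m_lead: "m \<in> lead_paths I"
    using assms unfolding m_def lead_paths_def by blast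
  obtain q where q: "q \<in> basis_paths" "right_factor q m"
    using basis_paths_below[OF m_lead] .
  have q_lead: "q \<in> lead_paths I"
    using q(1) unfolding basis_paths_def minimal_wrt_def by blast
  note u = basis_generator[OF q(1)]
  have u_carrier: "generator q \<in> carrier R"
    using u(1) I_closed(1) by blast
  have "q \<in> paths" "m \<in> paths"
    using lead_paths_subset[OF I_closed(1)] m_lead q_lead by auto
  then obtain w where w: "w \<in> paths" "ptl w = fst q" "path_cat w q = m"
    using q(2) by (rule right_factorE)
  have e: "\<sigma>\<^sub>P w (generator q q) \<noteq> 0"
    using lead_path(1)[OF u_carrier u(3)] u(4) ring_automorphism_eq_zero_iff[OF automorphism_path_sigma[OF w(1)]]
    by simp
  define d where "d = x m * inverse (\<sigma>\<^sub>P w (generator q q))"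
  have "d \<noteq> 0"
    unfolding d_def using e lead_path(1)[OF x_carrier assms(2)] unfolding m_def by simp
  have "monomial d w w \<noteq> 0"
    using \<open>d \<noteq> 0\<close> by (simp add: monomial_def)
  then have c: "monomial d w \<in> ending_at (fst q)" "monomial d w \<noteq> (\<lambda>p. 0)" "lead_path (monomial d w) = w"
    using monomial_ending_at[OF w(1,2)] lead_path_monomial[OF w(1) \<open>d \<noteq> 0\<close>] by auto
  note lead_c = conv_lead_path[OF c(1,2) u(2,3), unfolded c(3) u(4) w(3)]
  have "conv (monomial d w) (generator q) m = x m"
    using lead_c(2) e unfolding d_def monomial_def by (simp add: mult.assoc)
  then show ?thesis
    using q(1) c(1) lead_c(4) unfolding m_def by blast
qed

lemma distinct_lead_paths:
  assumes "i \<in> basis_paths" "j \<in> basis_paths" "a \<in> ending_at (fst i)" "b \<in> ending_at (fst j)"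
    and "a \<noteq> (\<lambda>p. 0)" "b \<noteq> (\<lambda>p. 0)" and eq: "path_cat (lead_path a) i = path_cat (lead_path b) j"
  shows "i = j"
proof -
  have "a (lead_path a) \<noteq> 0" "b (lead_path b) \<noteq> 0"
    using assms(3-6) lead_path(1) unfolding ending_at_def by blast+
  then have "ptl (lead_path a) = fst i" "ptl (lead_path b) = fst j"
    using assms(3,4) unfolding ending_at_def by blast+
  then have "ptl i = ptl j"
    using arg_cong[OF eq, of ptl] by (simp add: path_tail_cat)
  moreover have "snd (lead_path b) @ snd j = snd (lead_path a) @ snd i"
    using arg_cong[OF eq, of snd] by simp
  then have "suffix (snd i) (snd (lead_path b) @ snd j)"
    by (rule suffixI)
  then have "suffix (snd i) (snd j) \<or> suffix (snd j) (snd i)"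
    using suffixI[OF refl] by (rule suffix_same_cases)
  ultimately have "right_factor i j \<or> right_factor j i"
    unfolding right_factor_def by auto
  then show ?thesis
    using assms(1,2) unfolding basis_paths_def minimal_wrt_def by blast
qed

lemma finsum_generators:
  assumes "\<forall>q\<in>basis_paths. r q \<in> ending_at (fst q)"
  shows "(\<Oplus>\<^bsub>R\<^esub>q\<in>basis_paths. r q \<otimes>\<^bsub>R\<^esub> generator q) = (\<lambda>p. \<Sum>q\<in>basis_paths. conv (r q) (generator q) p)"
proof -
  have "r q \<otimes>\<^bsub>R\<^esub> generator q = conv (r q) (generator q)" if "q \<in> basis_paths" for q
  proof -
    have "r q \<in> carrier R" "generator q \<in> carrier R"
      using that assms basis_generator(1) I_closed(1) ending_at_subset_carrier by blast+
    then show ?thesis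
      by (simp add: mult_eq_conv)
  qed
  then show ?thesis
    using finsum_R_eval[OF finite_basis_paths, of "\<lambda>q. r q \<otimes>\<^bsub>R\<^esub> generator q"] conv_in_carrier
    by (simp cong: sum.cong)
qed

lemma decomposition_exists:
  assumes "x \<in> I"
  shows "\<exists>r. (\<forall>q\<in>basis_paths. r q \<in> ending_at (fst q)) \<and>
    x = (\<lambda>p. \<Sum>q\<in>basis_paths. conv (r q) (generator q) p)"
proof (rule triangular_decomposition_exists[where A = "\<lambda>q. ending_at (fst q)" and F = "\<lambda>q r. conv r (generator q)",
      OF finite_basis_paths I_closed(1) I_closed(4)])
  show "conv a (generator q) \<in> I" if "q \<in> basis_paths" "a \<in> ending_at (fst q)" for q a
    using that ending_at_subset_carrier conv_left_closed basis_generator(1) by blast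
  show "\<exists>q\<in>basis_paths. \<exists>c\<in>ending_at (fst q). conv c (generator q) (lead_path y) = y (lead_path y) \<and>
      (\<forall>p. conv c (generator q) p \<noteq> 0 \<longrightarrow> path_key p \<le> path_key (lead_path y))"
    if "y \<in> I" "y \<noteq> (\<lambda>p. 0)" for y
    using cancel_lead_path[OF that] .
  show "(\<lambda>p. a p + b p) \<in> ending_at (fst q)" if "a \<in> ending_at (fst q)" "b \<in> ending_at (fst q)"
    for q :: "'v \<times> 'e list" and a b
    using that by (rule ending_at_closed(2))
  show "conv (\<lambda>p. a p + b p) (generator q) = (\<lambda>p. conv a (generator q) p + conv b (generator q) p)" for q a b
    by (rule conv_add_left)
qed (simp_all only: assms ending_at_closed(1) conv_zero_left)

lemma decomposition_unique:
  assumes r: "\<forall>q\<in>basis_paths. r q \<in> ending_at (fst q)" and r': "\<forall>q\<in>basis_paths. r' q \<in> ending_at (fst q)"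
    and eq: "(\<lambda>p. \<Sum>q\<in>basis_paths. conv (r q) (generator q) p) = (\<lambda>p. \<Sum>q\<in>basis_paths. conv (r' q) (generator q) p)"
  shows "\<forall>q\<in>basis_paths. r q = r' q"
proof (rule triangular_decomposition_unique[where A = "\<lambda>q. ending_at (fst q)"
      and F = "\<lambda>q a. conv a (generator q)" and lead_of = "\<lambda>q a. path_cat (lead_path a) q",
      OF finite_basis_paths _ _ _ _ r r' eq])
  show "(\<lambda>p. a p - b p) \<in> ending_at (fst q)" if "a \<in> ending_at (fst q)" "b \<in> ending_at (fst q)"
    for q :: "'v \<times> 'e list" and a b
    using that by (rule ending_at_closed(3))
  show "conv (\<lambda>p. a p - b p) (generator q) = (\<lambda>p. conv a (generator q) p - conv b (generator q) p)" for q a b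
    by (rule conv_diff_left)
  show "path_cat (lead_path a) q \<in> paths \<and> conv a (generator q) (path_cat (lead_path a) q) \<noteq> 0 \<and>
      (\<forall>p. conv a (generator q) p \<noteq> 0 \<longrightarrow> path_key p \<le> path_key (path_cat (lead_path a) q))"
    if "q \<in> basis_paths" "a \<in> ending_at (fst q)" "a \<noteq> (\<lambda>p. 0)" for q a
    using conv_lead_path[OF that(2,3) basis_generator(2,3)[OF that(1)]] basis_generator(4)[OF that(1)]
    by simp
  show "i = j" if "i \<in> basis_paths" "j \<in> basis_paths" "a \<in> ending_at (fst i)" "b \<in> ending_at (fst j)"
    "a \<noteq> (\<lambda>p. 0)" "b \<noteq> (\<lambda>p. 0)" "path_cat (lead_path a) i = path_cat (lead_path b) j" for i j a b
    using that by (rule distinct_lead_paths)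
qed

theorem projective_ideal_lmod: "projective_lmod R (ideal_lmod R I) TYPE('m) TYPE('n)"
proof (rule projective_ideal_lmodI[OF ring_R left_ideal finite_basis_paths, where A = "\<lambda>q. ending_at (fst q)"])
  show "\<forall>q\<in>basis_paths. generator q \<in> I"
    using basis_generator(1) by blast
  show "\<forall>q\<in>basis_paths. ending_at (fst q) \<subseteq> carrier R"
    using ending_at_subset_carrier by blast
  show "\<forall>q\<in>basis_paths. \<forall>a\<in>ending_at (fst q). \<forall>b\<in>ending_at (fst q). a \<oplus>\<^bsub>R\<^esub> b \<in> ending_at (fst q)"
    using ending_at_closed(2) by simp
  show "\<forall>q\<in>basis_paths. \<forall>a\<in>ending_at (fst q). \<forall>c\<in>carrier R. c \<otimes>\<^bsub>R\<^esub> a \<in> ending_at (fst q)"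
    using conv_ending_at ending_at_subset_carrier by (auto simp: mult_eq_conv subset_iff)
  show "\<forall>x\<in>I. \<exists>r. (\<forall>q\<in>basis_paths. r q \<in> ending_at (fst q)) \<and>
      x = (\<Oplus>\<^bsub>R\<^esub>q\<in>basis_paths. r q \<otimes>\<^bsub>R\<^esub> generator q)"
  proof
    fix x assume "x \<in> I"
    then obtain r where "\<forall>q\<in>basis_paths. r q \<in> ending_at (fst q)"
      "x = (\<lambda>p. \<Sum>q\<in>basis_paths. conv (r q) (generator q) p)"
      using decomposition_exists by blast
    then show "\<exists>r. (\<forall>q\<in>basis_paths. r q \<in> ending_at (fst q)) \<and>
        x = (\<Oplus>\<^bsub>R\<^esub>q\<in>basis_paths. r q \<otimes>\<^bsub>R\<^esub> generator q)"
      using finsum_generators[of r] by auto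
  qed
  show "\<forall>r r'. (\<forall>q\<in>basis_paths. r q \<in> ending_at (fst q)) \<longrightarrow> (\<forall>q\<in>basis_paths. r' q \<in> ending_at (fst q)) \<longrightarrow>
      (\<Oplus>\<^bsub>R\<^esub>q\<in>basis_paths. r q \<otimes>\<^bsub>R\<^esub> generator q) = (\<Oplus>\<^bsub>R\<^esub>q\<in>basis_paths. r' q \<otimes>\<^bsub>R\<^esub> generator q) \<longrightarrow>
      (\<forall>q\<in>basis_paths. r q = r' q)"
  proof (intro allI impI)
    fix r r' assume r: "\<forall>q\<in>basis_paths. r q \<in> ending_at (fst q)" and r': "\<forall>q\<in>basis_paths. r' q \<in> ending_at (fst q)"
      and "(\<Oplus>\<^bsub>R\<^esub>q\<in>basis_paths. r q \<otimes>\<^bsub>R\<^esub> generator q) = (\<Oplus>\<^bsub>R\<^esub>q\<in>basis_paths. r' q \<otimes>\<^bsub>R\<^esub> generator q)"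
    then have "(\<lambda>p. \<Sum>q\<in>basis_paths. conv (r q) (generator q) p) =
        (\<lambda>p. \<Sum>q\<in>basis_paths. conv (r' q) (generator q) p)"
      by (simp only: finsum_generators[OF r] finsum_generators[OF r'])
    then show "\<forall>q\<in>basis_paths. r q = r' q"
      by (rule decomposition_unique[OF r r'])
  qed
qed

end

section \<open>Right ideals\<close>

locale semilinear_path_alg_right_ideal = semilinear_path_alg Q0 Q1 hd_q tl_q \<sigma>
  for Q0 :: "'v set" and Q1 :: "'e set" and hd_q tl_q :: "'e \<Rightarrow> 'v" and \<sigma> :: "'e \<Rightarrow> 'k::division_ring \<Rightarrow> 'k" +
  fixes I :: "('v \<times> 'e list \<Rightarrow> 'k) set"
  assumes right_ideal: "left_ideal I (opposite_ring R)"
begin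

lemmas I_closed = additive_subgroup_R_closed[OF
    right_ideal[unfolded left_ideal_def additive_subgroup_opposite_ring_iff, THEN conjunct1]]

lemma conv_right_closed: "c \<in> carrier R \<Longrightarrow> x \<in> I \<Longrightarrow> conv x c \<in> I"
  using right_ideal I_closed(1) mult_eq_conv unfolding left_ideal_def by fastforce

definition basis_paths :: "('v \<times> 'e list) set"
  where "basis_paths = minimal_wrt left_factor (lead_paths I)"

definition generator :: "'v \<times> 'e list \<Rightarrow> 'v \<times> 'e list \<Rightarrow> 'k"
  where "generator q = (SOME u. u \<in> I \<and> u \<in> ending_at (ptl q) \<and> u \<noteq> (\<lambda>p. 0) \<and> lead_path u = q)"

lemma finite_basis_paths: "finite basis_paths"
  using finite_paths lead_paths_subset[OF I_closed(1)] unfolding basis_paths_def minimal_wrt_def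
  by (auto intro: finite_subset)

lemma generator:
  assumes "q \<in> lead_paths I"
  shows "generator q \<in> I" "generator q \<in> ending_at (ptl q)" "generator q \<noteq> (\<lambda>p. 0)"
    "lead_path (generator q) = q"
proof -
  obtain x where x: "x \<in> I" "x \<noteq> (\<lambda>p. 0)" "lead_path x = q"
    using assms unfolding lead_paths_def by blast
  have x_carrier: "x \<in> carrier R"
    using x I_closed(1) by blast
  note lead_x = lead_path[OF x_carrier x(2), unfolded x(3)]
  define u where "u = conv x (diag (\<lambda>v. if v = ptl q then 1 else 0))"
  have u_eq: "u = (\<lambda>r. if ptl r = ptl q then x r else 0)"
  proof
    fix r
    show "u r = (if ptl r = ptl q then x r else 0)"
      using carrier_R_outside[OF x_carrier, of r] ring_automorphism_zero[OF automorphism_path_sigma, of r]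
        ring_automorphism_def[THEN iffD1, OF automorphism_path_sigma, of r]
      unfolding u_def conv_diag_right[OF x_carrier] by (cases "r \<in> paths") auto
  qed
  have "u \<in> I"
    unfolding u_def using conv_right_closed diag_in_carrier x(1) by blast
  moreover have "u \<in> ending_at (ptl q)"
    using \<open>u \<in> I\<close> I_closed(1) unfolding ending_at_def by (auto simp: u_eq)
  moreover have "u q \<noteq> 0"
    using lead_x(1) u_eq by simp
  moreover have "lead_path u = q"
    using \<open>u q \<noteq> 0\<close> \<open>u \<in> I\<close> I_closed(1) lead_x(2) unfolding u_eq
    by (intro lead_path_eqI) (auto split: if_splits)
  ultimately have "\<exists>u. u \<in> I \<and> u \<in> ending_at (ptl q) \<and> u \<noteq> (\<lambda>p. 0) \<and> lead_path u = q"
    by blast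
  then have "generator q \<in> I \<and> generator q \<in> ending_at (ptl q) \<and> generator q \<noteq> (\<lambda>p. 0) \<and>
      lead_path (generator q) = q"
    unfolding generator_def by (rule someI_ex)
  then show "generator q \<in> I" "generator q \<in> ending_at (ptl q)" "generator q \<noteq> (\<lambda>p. 0)"
    "lead_path (generator q) = q"
    by auto
qed

lemma basis_generator:
  assumes "q \<in> basis_paths"
  shows "generator q \<in> I" "generator q \<in> ending_at (ptl q)" "generator q \<noteq> (\<lambda>p. 0)"
    "lead_path (generator q) = q"
  using generator assms unfolding basis_paths_def minimal_wrt_def by blast+

lemma basis_paths_below:
  assumes "m \<in> lead_paths I"
  obtains q where "q \<in> basis_paths" "left_factor q m"
proof -
  have "\<exists>q\<in>basis_paths. left_factor q m"
    unfolding basis_paths_def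
  proof (rule exists_minimal_wrt_below[of _ _ "\<lambda>q. length (snd q)"])
    show "left_factor a a" for a
      unfolding left_factor_def by simp
    show "left_factor a c" if "left_factor a b" "left_factor b c" for a b c
      using that prefix_order.trans unfolding left_factor_def by auto
    show "length (snd a) < length (snd b)" if "left_factor a b" "a \<noteq> b" for a b
      using that by (rule left_factor_length_less)
  qed (rule assms)
  then show ?thesis
    using that by blast
qed

text \<open>Here the monomial coefficient is found by inverting \<open>\<sigma>\<^sub>q\<close>: this is where surjectivity of
  the \<open>\<sigma>\<^sub>a\<close> is used.\<close>

lemma cancel_lead_path:
  assumes "x \<in> I" "x \<noteq> (\<lambda>p. 0)"
  shows "\<exists>q\<in>basis_paths. \<exists>c\<in>starting_at (ptl q). conv (generator q) c (lead_path x) = x (lead_path x) \<and>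
    (\<forall>p. conv (generator q) c p \<noteq> 0 \<longrightarrow> path_key p \<le> path_key (lead_path x))"
proof -
  define m where "m = lead_path x"
  have x_carrier: "x \<in> carrier R"
    using assms I_closed(1) by blast
  have m_lead: "m \<in> lead_paths I"
    using assms unfolding m_def lead_paths_def by blast
  obtain q where q: "q \<in> basis_paths" "left_factor q m"
    using basis_paths_below[OF m_lead] .
  note u = basis_generator[OF q(1)]
  have u_carrier: "generator q \<in> carrier R"
    using u(1) I_closed(1) by blast
  have "q \<in> paths" "m \<in> paths"
    using lead_paths_subset[OF I_closed(1)] m_lead q(1) unfolding basis_paths_def minimal_wrt_def by auto
  then obtain w where w: "w \<in> paths" "ptl q = fst w" "path_cat q w = m"
    using q(2) by (rule left_factorE)
  have e: "generator q q \<noteq> 0"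
    using lead_path(1)[OF u_carrier u(3)] u(4) by simp
  obtain d where d: "\<sigma>\<^sub>P q d = inverse (generator q q) * x m"
    using automorphism_path_sigma[OF \<open>q \<in> paths\<close>] unfolding ring_automorphism_def by (metis bij_pointE)
  have "d \<noteq> 0"
    using d e lead_path(1)[OF x_carrier assms(2)] ring_automorphism_zero[OF automorphism_path_sigma[OF \<open>q \<in> paths\<close>]]
    unfolding m_def by auto
  have "monomial d w w \<noteq> 0"
    using \<open>d \<noteq> 0\<close> by (simp add: monomial_def)
  then have c: "monomial d w \<in> starting_at (ptl q)" "monomial d w \<noteq> (\<lambda>p. 0)" "lead_path (monomial d w) = w"
    using monomial_starting_at[OF w(1) w(2)[symmetric]] lead_path_monomial[OF w(1) \<open>d \<noteq> 0\<close>] by auto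
  note lead_c = conv_lead_path[OF u(2,3) c(1,2), unfolded c(3) u(4) w(3)]
  have "conv (generator q) (monomial d w) m = x m"
    using lead_c(2) e d unfolding monomial_def by (simp add: mult.assoc[symmetric])
  then show ?thesis
    using q(1) c(1) lead_c(4) unfolding m_def by blast
qed

lemma distinct_lead_paths:
  assumes "i \<in> basis_paths" "j \<in> basis_paths" "a \<in> starting_at (ptl i)" "b \<in> starting_at (ptl j)"
    and "a \<noteq> (\<lambda>p. 0)" "b \<noteq> (\<lambda>p. 0)" and eq: "path_cat i (lead_path a) = path_cat j (lead_path b)"
  shows "i = j"
proof -
  have "fst i = fst j"
    using arg_cong[OF eq, of fst] by simp
  moreover have "snd j @ snd (lead_path b) = snd i @ snd (lead_path a)"
    using arg_cong[OF eq, of snd] by simp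
  then have "prefix (snd i) (snd j @ snd (lead_path b))"
    by (rule prefixI)
  then have "prefix (snd i) (snd j) \<or> prefix (snd j) (snd i)"
    using prefixI[OF refl] by (rule prefix_same_cases)
  ultimately have "left_factor i j \<or> left_factor j i"
    unfolding left_factor_def by auto
  then show ?thesis
    using assms(1,2) unfolding basis_paths_def minimal_wrt_def by blast
qed

lemma finsum_generators:
  assumes "\<forall>q\<in>basis_paths. r q \<in> starting_at (ptl q)"
  shows "(\<Oplus>\<^bsub>opposite_ring R\<^esub>q\<in>basis_paths. r q \<otimes>\<^bsub>opposite_ring R\<^esub> generator q) =
    (\<lambda>p. \<Sum>q\<in>basis_paths. conv (generator q) (r q) p)"
proof -
  have "r q \<otimes>\<^bsub>opposite_ring R\<^esub> generator q = conv (generator q) (r q)" if "q \<in> basis_paths" for q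
  proof -
    have "r q \<in> carrier R" "generator q \<in> carrier R"
      using that assms basis_generator(1) I_closed(1) starting_at_subset_carrier by blast+
    then show ?thesis
      by (simp add: mult_eq_conv)
  qed
  then show ?thesis
    using finsum_R_eval[OF finite_basis_paths, of "\<lambda>q. r q \<otimes>\<^bsub>opposite_ring R\<^esub> generator q"] conv_in_carrier
    by (simp add: finsum_opposite_ring cong: sum.cong)
qed

lemma decomposition_exists:
  assumes "x \<in> I"
  shows "\<exists>r. (\<forall>q\<in>basis_paths. r q \<in> starting_at (ptl q)) \<and>
    x = (\<lambda>p. \<Sum>q\<in>basis_paths. conv (generator q) (r q) p)"
proof (rule triangular_decomposition_exists[where A = "\<lambda>q. starting_at (ptl q)" and F = "\<lambda>q r. conv (generator q) r",
      OF finite_basis_paths I_closed(1) I_closed(4)])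
  show "conv (generator q) a \<in> I" if "q \<in> basis_paths" "a \<in> starting_at (ptl q)" for q a
    using that starting_at_subset_carrier conv_right_closed basis_generator(1) by blast
  show "\<exists>q\<in>basis_paths. \<exists>c\<in>starting_at (ptl q). conv (generator q) c (lead_path y) = y (lead_path y) \<and>
      (\<forall>p. conv (generator q) c p \<noteq> 0 \<longrightarrow> path_key p \<le> path_key (lead_path y))"
    if "y \<in> I" "y \<noteq> (\<lambda>p. 0)" for y
    using cancel_lead_path[OF that] .
  show "(\<lambda>p. a p + b p) \<in> starting_at (ptl q)" if "a \<in> starting_at (ptl q)" "b \<in> starting_at (ptl q)" for q a b
    using that by (rule starting_at_closed(2))
  show "conv (generator q) (\<lambda>p. a p + b p) = (\<lambda>p. conv (generator q) a p + conv (generator q) b p)" for q a b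
    by (rule conv_add_right)
qed (simp_all only: assms starting_at_closed(1) conv_zero_right)

lemma decomposition_unique:
  assumes r: "\<forall>q\<in>basis_paths. r q \<in> starting_at (ptl q)" and r': "\<forall>q\<in>basis_paths. r' q \<in> starting_at (ptl q)"
    and eq: "(\<lambda>p. \<Sum>q\<in>basis_paths. conv (generator q) (r q) p) = (\<lambda>p. \<Sum>q\<in>basis_paths. conv (generator q) (r' q) p)"
  shows "\<forall>q\<in>basis_paths. r q = r' q"
proof (rule triangular_decomposition_unique[where A = "\<lambda>q. starting_at (ptl q)"
      and F = "\<lambda>q a. conv (generator q) a" and lead_of = "\<lambda>q a. path_cat q (lead_path a)",
      OF finite_basis_paths _ _ _ _ r r' eq])
  show "(\<lambda>p. a p - b p) \<in> starting_at (ptl q)" if "a \<in> starting_at (ptl q)" "b \<in> starting_at (ptl q)" for q a b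
    using that by (rule starting_at_closed(3))
  show "conv (generator q) (\<lambda>p. a p - b p) = (\<lambda>p. conv (generator q) a p - conv (generator q) b p)" for q a b
    by (rule conv_diff_right)
  show "path_cat q (lead_path a) \<in> paths \<and> conv (generator q) a (path_cat q (lead_path a)) \<noteq> 0 \<and>
      (\<forall>p. conv (generator q) a p \<noteq> 0 \<longrightarrow> path_key p \<le> path_key (path_cat q (lead_path a)))"
    if "q \<in> basis_paths" "a \<in> starting_at (ptl q)" "a \<noteq> (\<lambda>p. 0)" for q a
    using conv_lead_path[OF basis_generator(2,3)[OF that(1)] that(2,3)] basis_generator(4)[OF that(1)]
    by simp
  show "i = j" if "i \<in> basis_paths" "j \<in> basis_paths" "a \<in> starting_at (ptl i)" "b \<in> starting_at (ptl j)"
    "a \<noteq> (\<lambda>p. 0)" "b \<noteq> (\<lambda>p. 0)" "path_cat i (lead_path a) = path_cat j (lead_path b)" for i j a b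
    using that by (rule distinct_lead_paths)
qed

theorem projective_ideal_lmod:
  "projective_lmod (opposite_ring R) (ideal_lmod (opposite_ring R) I) TYPE('m) TYPE('n)"
proof (rule projective_ideal_lmodI[OF ring_opposite_ring[OF ring_R] right_ideal finite_basis_paths,
      where A = "\<lambda>q. starting_at (ptl q)"])
  show "\<forall>q\<in>basis_paths. generator q \<in> I"
    using basis_generator(1) by blast
  show "\<forall>q\<in>basis_paths. starting_at (ptl q) \<subseteq> carrier (opposite_ring R)"
    using starting_at_subset_carrier by simp
  show "\<forall>q\<in>basis_paths. \<forall>a\<in>starting_at (ptl q). \<forall>b\<in>starting_at (ptl q).
      a \<oplus>\<^bsub>opposite_ring R\<^esub> b \<in> starting_at (ptl q)"
    using starting_at_closed(2) by simp
  show "\<forall>q\<in>basis_paths. \<forall>a\<in>starting_at (ptl q). \<forall>c\<in>carrier (opposite_ring R).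
      c \<otimes>\<^bsub>opposite_ring R\<^esub> a \<in> starting_at (ptl q)"
    using conv_starting_at starting_at_subset_carrier by (auto simp: mult_eq_conv subset_iff)
  show "\<forall>x\<in>I. \<exists>r. (\<forall>q\<in>basis_paths. r q \<in> starting_at (ptl q)) \<and>
      x = (\<Oplus>\<^bsub>opposite_ring R\<^esub>q\<in>basis_paths. r q \<otimes>\<^bsub>opposite_ring R\<^esub> generator q)"
  proof
    fix x assume "x \<in> I"
    then obtain r where "\<forall>q\<in>basis_paths. r q \<in> starting_at (ptl q)"
      "x = (\<lambda>p. \<Sum>q\<in>basis_paths. conv (generator q) (r q) p)"
      using decomposition_exists by blast
    then show "\<exists>r. (\<forall>q\<in>basis_paths. r q \<in> starting_at (ptl q)) \<and>
        x = (\<Oplus>\<^bsub>opposite_ring R\<^esub>q\<in>basis_paths. r q \<otimes>\<^bsub>opposite_ring R\<^esub> generator q)"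
      using finsum_generators[of r] by auto
  qed
  show "\<forall>r r'. (\<forall>q\<in>basis_paths. r q \<in> starting_at (ptl q)) \<longrightarrow> (\<forall>q\<in>basis_paths. r' q \<in> starting_at (ptl q)) \<longrightarrow>
      (\<Oplus>\<^bsub>opposite_ring R\<^esub>q\<in>basis_paths. r q \<otimes>\<^bsub>opposite_ring R\<^esub> generator q) =
        (\<Oplus>\<^bsub>opposite_ring R\<^esub>q\<in>basis_paths. r' q \<otimes>\<^bsub>opposite_ring R\<^esub> generator q) \<longrightarrow>
      (\<forall>q\<in>basis_paths. r q = r' q)"
  proof (intro allI impI)
    fix r r' assume r: "\<forall>q\<in>basis_paths. r q \<in> starting_at (ptl q)"
      and r': "\<forall>q\<in>basis_paths. r' q \<in> starting_at (ptl q)"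
      and "(\<Oplus>\<^bsub>opposite_ring R\<^esub>q\<in>basis_paths. r q \<otimes>\<^bsub>opposite_ring R\<^esub> generator q) =
        (\<Oplus>\<^bsub>opposite_ring R\<^esub>q\<in>basis_paths. r' q \<otimes>\<^bsub>opposite_ring R\<^esub> generator q)"
    then have "(\<lambda>p. \<Sum>q\<in>basis_paths. conv (generator q) (r q) p) =
        (\<lambda>p. \<Sum>q\<in>basis_paths. conv (generator q) (r' q) p)"
      by (simp only: finsum_generators[OF r] finsum_generators[OF r'])
    then show "\<forall>q\<in>basis_paths. r q = r' q"
      by (rule decomposition_unique[OF r r'])
  qed
qed

end

theorem proposition5p13:
  fixes Q0 :: "'v set" and Q1 :: "'e set" and hd_q tl_q :: "'e \<Rightarrow> 'v"
    and \<sigma> :: "'e \<Rightarrow> 'k::division_ring \<Rightarrow> 'k"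
  assumes "finite_quiver Q0 Q1 hd_q tl_q"
    and "\<forall>a\<in>Q1. ring_automorphism (\<sigma> a)"
    and "acyclic_quiver Q1 hd_q tl_q"
  shows "ring (semilinear_path_algebra Q0 Q1 hd_q tl_q \<sigma>)
    \<and> ring_hom_ring (\<lparr>carrier = UNIV, mult = (*), one = 1, zero = 0, add = (+)\<rparr> :: 'k ring)
         (semilinear_path_algebra Q0 Q1 hd_q tl_q \<sigma>) (path_alg_scalar Q0)
    \<and> hereditary (semilinear_path_algebra Q0 Q1 hd_q tl_q \<sigma>) TYPE('m) TYPE('n)"
proof -
  interpret semilinear_path_alg Q0 Q1 hd_q tl_q \<sigma>
    using assms by unfold_locales
  have "projective_lmod R (ideal_lmod R I) TYPE('m) TYPE('n)" if "left_ideal I R" for I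
  proof -
    interpret semilinear_path_alg_left_ideal Q0 Q1 hd_q tl_q \<sigma> I
      using that by unfold_locales
    show ?thesis
      by (rule projective_ideal_lmod)
  qed
  moreover have "projective_lmod (opposite_ring R) (ideal_lmod (opposite_ring R) I) TYPE('m) TYPE('n)"
    if "left_ideal I (opposite_ring R)" for I
  proof -
    interpret semilinear_path_alg_right_ideal Q0 Q1 hd_q tl_q \<sigma> I
      using that by unfold_locales
    show ?thesis
      by (rule projective_ideal_lmod)
  qed
  ultimately show ?thesis
    unfolding hereditary_def left_hereditary_def
    using ring_R ring_opposite_ring ring_hom_ring_path_alg_scalar by blast
qed

end
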